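(* Let $H\le\mathrm{SL}_2(\mathbb Z)$ be a subgroup, $\rho:\widetilde H\to\mathrm{GL}(\mathcal W)$ a representation, $B$ a real symmetric bilinear form on a real vector space $V$ of dimension $\mathfrak n$, $\mathfrak B$ an $\mathbb R$-basis of $V$ with Gram matrix $G_{\mathfrak B}$, and $k\in\frac12\mathbb Z$ with $k\notin\{0,-1,-2,\dots\}$. Then the map $\sum_{\mathbf j}h_{\mathbf j}T^{\mathbf j}\mapsto(D_{k,\mathbf p}\sum_{\mathbf j}h_{\mathbf j}T^{\mathbf j})_{\mathbf p\in\mathbb Z_{\ge0}^{\mathfrak n}}$ is a $\mathbb C$-linear isomorphism from the space of formal series $\sum_{\mathbf j\in\mathbb Z_{\ge0}^{\mathfrak n}}h_{\mathbf j}T^{\mathbf j}$ (with $h_{\mathbf j}:\mathbb H\to\mathcal W$ holomorphic) which transform like modular forms of weight $k$ under $H$ with representation $\rho$, onto $\prod_{\mathbf p\in\mathbb Z_{\ge0}^{\mathfrak n}}\mathrm{Hol}_{k+s(\mathbf p)}(H,\rho)$, where $\mathrm{Hol}_{k'}(H,\rho)$ is the space of holomorphic $g:\mathbb H\to\mathcal W$ with $(\varepsilon\sqrt{c\tau+d})^{-2k'}g(\gamma\tau)=\rho(\gamma,\varepsilon\sqrt{c\tau+d})g(\tau)$ for all $(\gamma,\varepsilon\sqrt{c\tau+d})\in\widetilde H$ (no condition at cusps).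
   Context: $T=(T_1,\dots,T_{\mathfrak n})$ are formal variables, $T^{\mathbf j}=\prod T_i^{j_i}$; formal series $\sum h_{\mathbf j}T^{\mathbf j}$ are set to have $h_{\mathbf j}=0$ for $\mathbf j\notin\mathbb Z_{\ge0}^{\mathfrak n}$. Metaplectic group $\widetilde{\mathrm{SL}_2(\mathbb R)}$: pairs $(\gamma,\varepsilon\sqrt{c\tau+d})$ with $\gamma=\begin{pmatrix}a&b\\c&d\end{pmatrix}$, $\varepsilon=\pm1$, principal branch, product $(\gamma_1,\phi_1)(\gamma_2,\phi_2)=(\gamma_1\gamma_2,\phi_1(\gamma_2\tau)\phi_2(\tau))$; $\widetilde H$ is the preimage of $H$. For $\Lambda=(\lambda_{ij})\in M_{\mathfrak n}(\mathbb Z_{\ge0})$: $s(\Lambda)=\sum\lambda_{ij}$, $\Lambda!=\prod\lambda_{ij}!$, $\pi(\Lambda)\in\mathbb Z^{\mathfrak n}$ with $\pi(\Lambda)_i=\sum_j\lambda_{ij}+\sum_j\lambda_{ji}$, $M^\Lambda=\prod m_{ij}^{\lambda_{ij}}$ ($0^0=1$); $s(\mathbf p)=\sum p_i$. Slash on formal series: $(\sum h_{\mathbf j}T^{\mathbf j})|^{\mathfrak B}_{k,B}(\gamma,\varepsilon\sqrt{c\tau+d})=\sum_{\mathbf p}g_{\mathbf p}T^{\mathbf p}$ with $g_{\mathbf p}(\tau)=\varepsilon^{-2k}\sum_{\Lambda}\frac{(-\pi icG_{\mathfrak B})^\Lambda}{\Lambda!}(c\tau+d)^{-(k+s(\mathbf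 p)-s(\Lambda))}h_{\mathbf p-\pi(\Lambda)}(\frac{a\tau+b}{c\tau+d})$ (powers of $c\tau+d$ via the principal branch). The series transforms like a modular form of weight $k$ under $H$ with representation $\rho$ if $(\sum h_{\mathbf j}T^{\mathbf j})|^{\mathfrak B}_{k,B}\gamma=\sum\rho(\gamma)\circ h_{\mathbf j}T^{\mathbf j}$ for all $\gamma\in\widetilde H$. Operator: for $\mathbf p\in\mathbb Z_{\ge0}^{\mathfrak n}$, $\lambda=[s(\mathbf p)/2]$, $\lambda'=[(s(\mathbf p)-1)/2]$, $D_{k,\mathbf p}(\sum h_{\mathbf j}T^{\mathbf j})=4^\lambda\lambda!\sum_{s(\Lambda)\le\lambda}\frac{(-\pi iG_{\mathfrak B})^\Lambda}{\Lambda!}\big(\prod_{m=\lambda'}^{s(\mathbf p)-2-s(\Lambda)}(k+m)\big)\frac{d^{s(\Lambda)}}{d\tau^{s(\Lambda)}}h_{\mathbf p-\pi(\Lambda)}$ (empty product $=1$). *)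

theory Defs
  imports "HOL-Complex_Analysis.Complex_Analysis"
begin

text \<open>A 2x2 integer matrix (a,b,c,d) stands for [[a,b],[c,d]].\<close>
type_synonym mat2 = "int \<times> int \<times> int \<times> int"
text \<open>A metaplectic element (gamma, e) stands for (gamma, e*sqrt(c tau + d)), e = 1 or -1.\<close>
type_synonym mpel = "mat2 \<times> int"

definition uhp :: "complex set" where
  "uhp = {\<tau>. Im \<tau> > 0}"

fun mob :: "mat2 \<Rightarrow> complex \<Rightarrow> complex" where
  "mob (a, b, c, d) \<tau> = (of_int a * \<tau> + of_int b) / (of_int c * \<tau> + of_int d)"

fun mat2_mult :: "mat2 \<Rightarrow> mat2 \<Rightarrow> mat2" where
  "mat2_mult (a, b, c, d) (a', b', c', d') =
     (a*a' + b*c', a*b' + b*d', c*a' + d*c', c*b' + d*d')"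

fun mat2_det :: "mat2 \<Rightarrow> int" where
  "mat2_det (a, b, c, d) = a*d - b*c"

fun mat2_inv :: "mat2 \<Rightarrow> mat2" where
  "mat2_inv (a, b, c, d) = (d, -b, -c, a)"

definition is_sl2z_subgroup :: "mat2 set \<Rightarrow> bool" where
  "is_sl2z_subgroup H \<longleftrightarrow> (\<forall>g\<in>H. mat2_det g = 1) \<and> (1, 0, 0, 1) \<in> H \<and>
     (\<forall>g\<in>H. \<forall>h\<in>H. mat2_mult g h \<in> H) \<and> (\<forall>g\<in>H. mat2_inv g \<in> H)"

fun mp_phi :: "mpel \<Rightarrow> complex \<Rightarrow> complex" where
  "mp_phi ((a, b, c, d), e) \<tau> = of_int e * csqrt (of_int c * \<tau> + of_int d)"

definition mp_lift :: "mat2 set \<Rightarrow> mpel set" where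
  "mp_lift H = {(\<gamma>, e). \<gamma> \<in> H \<and> (e = 1 \<or> e = -1)}"

text \<open>Product (g1,phi1)(g2,phi2) = (g1 g2, phi1(g2 tau) phi2(tau)).\<close>
definition mp_mult :: "mpel \<Rightarrow> mpel \<Rightarrow> mpel" where
  "mp_mult g1 g2 = (let \<gamma>3 = mat2_mult (fst g1) (fst g2) in
     (\<gamma>3, THE e. (e = 1 \<or> e = -1) \<and>
        (\<forall>\<tau>\<in>uhp. mp_phi g1 (mob (fst g2) \<tau>) * mp_phi g2 \<tau> = mp_phi (\<gamma>3, e) \<tau>)))"

definition is_rep :: "mat2 set \<Rightarrow> (mpel \<Rightarrow> complex^'m^'m) \<Rightarrow> bool" where
  "is_rep H \<rho> \<longleftrightarrow> (\<forall>g\<in>mp_lift H. invertible (\<rho> g)) \<and>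
     (\<forall>g1\<in>mp_lift H. \<forall>g2\<in>mp_lift H. \<rho> (mp_mult g1 g2) = \<rho> g1 ** \<rho> g2)"

definition midx :: "nat \<Rightarrow> (nat \<Rightarrow> nat) set" where
  "midx n = {j. \<forall>i\<ge>n. j i = 0}"

definition sidx :: "nat \<Rightarrow> (nat \<Rightarrow> nat) \<Rightarrow> nat" where
  "sidx n p = (\<Sum>i<n. p i)"

definition smat :: "nat \<Rightarrow> (nat \<Rightarrow> nat \<Rightarrow> nat) \<Rightarrow> nat" where
  "smat n \<Lambda> = (\<Sum>i<n. \<Sum>j<n. \<Lambda> i j)"

definition mats :: "nat \<Rightarrow> nat \<Rightarrow> (nat \<Rightarrow> nat \<Rightarrow> nat) set" where
  "mats n N = {\<Lambda>. (\<forall>i j. n \<le> i \<or> n \<le> j \<longrightarrow> \<Lambda> i j = 0) \<and> smat n \<Lambda> \<le> N}"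

definition piL :: "nat \<Rightarrow> (nat \<Rightarrow> nat \<Rightarrow> nat) \<Rightarrow> nat \<Rightarrow> nat" where
  "piL n \<Lambda> = (\<lambda>i. if i < n then (\<Sum>j<n. \<Lambda> i j) + (\<Sum>j<n. \<Lambda> j i) else 0)"

definition factL :: "nat \<Rightarrow> (nat \<Rightarrow> nat \<Rightarrow> nat) \<Rightarrow> complex" where
  "factL n \<Lambda> = (\<Prod>i<n. \<Prod>j<n. fact (\<Lambda> i j))"

definition powL :: "nat \<Rightarrow> (nat \<Rightarrow> nat \<Rightarrow> complex) \<Rightarrow> (nat \<Rightarrow> nat \<Rightarrow> nat) \<Rightarrow> complex" where
  "powL n M \<Lambda> = (\<Prod>i<n. \<Prod>j<n. M i j ^ \<Lambda> i j)"

text \<open>h_{p - q}, with the convention h_j = 0 if j has a negative entry.\<close>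
definition coeff_sub :: "((nat \<Rightarrow> nat) \<Rightarrow> complex \<Rightarrow> complex^'m) \<Rightarrow> (nat \<Rightarrow> nat) \<Rightarrow> (nat \<Rightarrow> nat)
    \<Rightarrow> complex \<Rightarrow> complex^'m" where
  "coeff_sub h p q = (if \<forall>i. q i \<le> p i then h (\<lambda>i. p i - q i) else (\<lambda>_. 0))"

definition hol_vec :: "(complex \<Rightarrow> complex^'m) \<Rightarrow> complex set \<Rightarrow> bool" where
  "hol_vec f S \<longleftrightarrow> (\<forall>i. (\<lambda>\<tau>. f \<tau> $ i) holomorphic_on S)"

definition vderiv :: "(complex \<Rightarrow> complex^'m) \<Rightarrow> complex \<Rightarrow> complex^'m" where
  "vderiv f = (\<lambda>\<tau>. \<chi> i. deriv (\<lambda>z. f z $ i) \<tau>)"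

text \<open>Coefficient g_p(tau) of the slashed series; G is the Gram matrix.\<close>
definition slash_coeff :: "nat \<Rightarrow> (nat \<Rightarrow> nat \<Rightarrow> real) \<Rightarrow> real \<Rightarrow>
    ((nat \<Rightarrow> nat) \<Rightarrow> complex \<Rightarrow> complex^'m) \<Rightarrow> mpel \<Rightarrow> (nat \<Rightarrow> nat) \<Rightarrow> complex \<Rightarrow> complex^'m" where
  "slash_coeff n G k h g p \<tau> =
     (case g of ((a, b, c, d), e) \<Rightarrow>
       (of_int e) powr (complex_of_real (- 2 * k)) *s
       (\<Sum>\<Lambda>\<in>mats n (sidx n p).
          (powL n (\<lambda>i j. - of_real pi * \<i> * of_int c * of_real (G i j)) \<Lambda> / factL n \<Lambda>
           * (of_int c * \<tau> + of_int d) powr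
               (- (of_real k + of_nat (sidx n p) - of_nat (smat n \<Lambda>))))
          *s coeff_sub h p (piL n \<Lambda>) (mob (a, b, c, d) \<tau>)))"

definition transforms :: "nat \<Rightarrow> (nat \<Rightarrow> nat \<Rightarrow> real) \<Rightarrow> real \<Rightarrow> mat2 set \<Rightarrow>
    (mpel \<Rightarrow> complex^'m^'m) \<Rightarrow> ((nat \<Rightarrow> nat) \<Rightarrow> complex \<Rightarrow> complex^'m) \<Rightarrow> bool" where
  "transforms n G k H \<rho> h \<longleftrightarrow>
     (\<forall>g\<in>mp_lift H. \<forall>p\<in>midx n. \<forall>\<tau>\<in>uhp. slash_coeff n G k h g p \<tau> = \<rho> g *v h p \<tau>)"

text \<open>Formal series with holomorphic coefficients on the upper half-plane (functions are
  normalised to be 0 off the upper half-plane and off the valid multi-indices).\<close>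
definition series_space :: "nat \<Rightarrow> (nat \<Rightarrow> nat \<Rightarrow> real) \<Rightarrow> real \<Rightarrow> mat2 set \<Rightarrow>
    (mpel \<Rightarrow> complex^'m^'m) \<Rightarrow> ((nat \<Rightarrow> nat) \<Rightarrow> complex \<Rightarrow> complex^'m) set" where
  "series_space n G k H \<rho> = {h.
     (\<forall>j. hol_vec (h j) uhp) \<and> (\<forall>j. \<forall>\<tau>. \<tau> \<notin> uhp \<longrightarrow> h j \<tau> = 0) \<and>
     (\<forall>j. j \<notin> midx n \<longrightarrow> h j = (\<lambda>_. 0)) \<and> transforms n G k H \<rho> h}"

text \<open>Hol_{k'}(H, rho) (no condition at the cusps).\<close>
definition Hol :: "real \<Rightarrow> mat2 set \<Rightarrow> (mpel \<Rightarrow> complex^'m^'m) \<Rightarrow> (complex \<Rightarrow> complex^'m) set" where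
  "Hol k' H \<rho> = {g. hol_vec g uhp \<and> (\<forall>\<tau>. \<tau> \<notin> uhp \<longrightarrow> g \<tau> = 0) \<and>
     (\<forall>ge\<in>mp_lift H. \<forall>\<tau>\<in>uhp.
        (mp_phi ge \<tau>) powr (complex_of_real (- 2 * k')) *s g (mob (fst ge) \<tau>) = \<rho> ge *v g \<tau>)}"

definition prod_space :: "nat \<Rightarrow> real \<Rightarrow> mat2 set \<Rightarrow> (mpel \<Rightarrow> complex^'m^'m) \<Rightarrow>
    ((nat \<Rightarrow> nat) \<Rightarrow> complex \<Rightarrow> complex^'m) set" where
  "prod_space n k H \<rho> = {g. \<forall>p. (p \<in> midx n \<longrightarrow> g p \<in> Hol (k + real (sidx n p)) H \<rho>) \<and>
                                  (p \<notin> midx n \<longrightarrow> g p = (\<lambda>_. 0))}"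

definition Dop :: "nat \<Rightarrow> (nat \<Rightarrow> nat \<Rightarrow> real) \<Rightarrow> real \<Rightarrow> (nat \<Rightarrow> nat) \<Rightarrow>
    ((nat \<Rightarrow> nat) \<Rightarrow> complex \<Rightarrow> complex^'m) \<Rightarrow> complex \<Rightarrow> complex^'m" where
  "Dop n G k p h \<tau> =
     (let sp = sidx n p; l = sp div 2; l' = (int sp - 1) div 2 in
      (4 ^ l * fact l) *s
      (\<Sum>\<Lambda>\<in>mats n l.
         (powL n (\<lambda>i j. - of_real pi * \<i> * of_real (G i j)) \<Lambda> / factL n \<Lambda>
          * (\<Prod>m\<in>{l'..int sp - 2 - int (smat n \<Lambda>)}. of_real k + of_int m))
         *s ((vderiv ^^ smat n \<Lambda>) (coeff_sub h p (piL n \<Lambda>)) \<tau>)))"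

definition Dmap :: "nat \<Rightarrow> (nat \<Rightarrow> nat \<Rightarrow> real) \<Rightarrow> real \<Rightarrow>
    ((nat \<Rightarrow> nat) \<Rightarrow> complex \<Rightarrow> complex^'m) \<Rightarrow> (nat \<Rightarrow> nat) \<Rightarrow> complex \<Rightarrow> complex^'m" where
  "Dmap n G k h = (\<lambda>p \<tau>. if p \<in> midx n \<and> \<tau> \<in> uhp then Dop n G k p h \<tau> else 0)"

end

theory Submission
  imports Defs "HOL-Library.FuncSet" "HOL-Computational_Algebra.Polynomial"
begin

text \<open>Everything reduces to scalar-valued coefficients, one component of the representation space
  at a time. The operator \<open>D\<^sub>k\<^sub>,\<^sub>p\<close> is triangular with respect to the weight \<open>s(p)\<close>: its \<open>\<Lambda> = 0\<close>
  term is \<open>h\<^sub>p\<close> times \<open>4^\<lambda> \<lambda>! \<Prod>(k + m)\<close>, which is nonzero because \<open>k\<close> is not a nonpositive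
  integer, while all other terms only involve derivatives of \<open>h\<^sub>q\<close> with \<open>s(q) < s(p)\<close>. Hence \<open>D\<^sub>k\<close>
  is injective, and every family \<open>(g\<^sub>p)\<close> has a preimage, built by recursion on \<open>s(p)\<close>.

  The heart of the matter is equivariance: applying \<open>D\<^sub>k\<^sub>,\<^sub>p\<close> to the slashed series gives
  \<open>(\<epsilon> sqrt(c\<tau> + d)) powr (-2(k + s(p)))\<close> times \<open>(D\<^sub>k\<^sub>,\<^sub>p h)(\<gamma>\<tau>)\<close>. Expanding the derivatives of
  \<open>(c\<tau> + d) powr (-\<beta>) F(\<gamma>\<tau>)\<close> produces a double sum over pairs of index matrices \<open>(\<Lambda>, M)\<close>;
  regrouped by \<open>N = \<Lambda> + M\<close>, the multinomial Vandermonde identity for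
  \<open>x^\<Lambda>/\<Lambda>! \<cdot> x^(N-\<Lambda>)/(N-\<Lambda>)!\<close> and the vanishing of high finite differences of Pochhammer symbols
  cancel every term that involves \<open>c\<close>. Equivariance shows that \<open>D\<^sub>k\<close> maps transforming series into
  the product of the spaces \<open>Hol(k + s(p))\<close>; applied to the constructed preimage \<open>h\<close>, it shows that
  \<open>h|\<gamma>\<close> and \<open>\<rho>(\<gamma>) h\<close> have the same image, so by injectivity the preimage transforms as well.\<close>

definition mat_supported :: "nat \<Rightarrow> (nat \<Rightarrow> nat \<Rightarrow> nat) \<Rightarrow> bool" where
  "mat_supported n \<Lambda> \<longleftrightarrow> (\<forall>i j. n \<le> i \<or> n \<le> j \<longrightarrow> \<Lambda> i j = 0)"

definition submats :: "(nat \<Rightarrow> nat \<Rightarrow> nat) \<Rightarrow> (nat \<Rightarrow> nat \<Rightarrow> nat) set" where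
  "submats N = {\<Lambda>. \<forall>i j. \<Lambda> i j \<le> N i j}"

definition mat_of_pairs :: "nat \<Rightarrow> (nat \<times> nat \<Rightarrow> nat) \<Rightarrow> nat \<Rightarrow> nat \<Rightarrow> nat" where
  "mat_of_pairs n g = (\<lambda>i j. if i < n \<and> j < n then g (i, j) else 0)"

lemma smat_eq_sum_pairs: "smat n \<Lambda> = (\<Sum>e\<in>{..<n}\<times>{..<n}. case_prod \<Lambda> e)"
  unfolding smat_def by (simp add: sum.cartesian_product)

lemma entry_le_smat: "i < n \<Longrightarrow> j < n \<Longrightarrow> \<Lambda> i j \<le> smat n \<Lambda>"
proof -
  assume ij: "i < n" "j < n"
  have "\<Lambda> i j \<le> (\<Sum>j'<n. \<Lambda> i j')" using ij by (intro member_le_sum) auto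
  also have "\<dots> \<le> smat n \<Lambda>" unfolding smat_def using ij
    by (intro member_le_sum[where f="\<lambda>i. \<Sum>j<n. \<Lambda> i j"]) auto
  finally show ?thesis .
qed

lemma mats_supported: "\<Lambda> \<in> mats n M \<Longrightarrow> mat_supported n \<Lambda>"
  by (simp add: mats_def mat_supported_def)

lemma zero_in_mats: "(\<lambda>i j. 0) \<in> mats n M"
  by (simp add: mats_def smat_def)

lemma finite_mats: "finite (mats n M)"
proof (rule finite_subset)
  show "mats n M \<subseteq> mat_of_pairs n ` PiE ({..<n}\<times>{..<n}) (\<lambda>_. {..M})"
  proof
    fix \<Lambda> assume \<Lambda>: "\<Lambda> \<in> mats n M"
    let ?g = "restrict (case_prod \<Lambda>) ({..<n}\<times>{..<n})"
    have "?g \<in> PiE ({..<n}\<times>{..<n}) (\<lambda>_. {..M})"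
      using \<Lambda> entry_le_smat[of _ n _ \<Lambda>] by (auto simp: mats_def intro: order.trans)
    moreover have "\<Lambda> = mat_of_pairs n ?g"
      using \<Lambda> by (auto simp: mat_of_pairs_def mats_def fun_eq_iff)
    ultimately show "\<Lambda> \<in> mat_of_pairs n ` PiE ({..<n}\<times>{..<n}) (\<lambda>_. {..M})" by blast
  qed
qed (auto intro: finite_PiE)

lemma submats_subset_mats: "mat_supported n N \<Longrightarrow> submats N \<subseteq> mats n (smat n N)"
  unfolding submats_def mats_def mat_supported_def smat_def
  by (auto intro!: sum_mono) (metis le_zero_eq)+

lemma finite_submats: "mat_supported n N \<Longrightarrow> finite (submats N)"
  using submats_subset_mats finite_mats finite_subset by blast

lemma submats_supported:
  assumes N: "mat_supported n N" and \<Lambda>: "\<Lambda> \<in> submats N"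
  shows "mat_supported n \<Lambda>"
proof -
  have "\<Lambda> i j = 0" if "n \<le> i \<or> n \<le> j" for i j
  proof -
    have "N i j = 0" using N that unfolding mat_supported_def by blast
    moreover have "\<Lambda> i j \<le> N i j" using \<Lambda> by (simp add: submats_def)
    ultimately show ?thesis by simp
  qed
  thus ?thesis by (simp add: mat_supported_def)
qed

lemma smat_mono: "\<Lambda> \<in> submats N \<Longrightarrow> smat n \<Lambda> \<le> smat n N"
  unfolding smat_def submats_def by (intro sum_mono) auto

lemma smat_diff: "\<Lambda> \<in> submats N \<Longrightarrow> smat n (\<lambda>i j. N i j - \<Lambda> i j) = smat n N - smat n \<Lambda>"
proof -
  assume \<Lambda>: "\<Lambda> \<in> submats N"
  have le: "\<Lambda> i j \<le> N i j" for i j using \<Lambda> by (simp add: submats_def)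
  have row: "(\<Sum>j<n. N i j - \<Lambda> i j) = (\<Sum>j<n. N i j) - (\<Sum>j<n. \<Lambda> i j)" for i
    by (rule sum_subtractf_nat) (simp add: le)
  have "(\<Sum>i<n. (\<Sum>j<n. N i j) - (\<Sum>j<n. \<Lambda> i j)) = (\<Sum>i<n. \<Sum>j<n. N i j) - (\<Sum>i<n. \<Sum>j<n. \<Lambda> i j)"
    by (rule sum_subtractf_nat) (simp add: le sum_mono)
  thus ?thesis unfolding smat_def row .
qed

lemma smat_pos: "mat_supported n \<Lambda> \<Longrightarrow> \<Lambda> \<noteq> (\<lambda>i j. 0) \<Longrightarrow> 0 < smat n \<Lambda>"
proof (rule ccontr)
  assume supp: "mat_supported n \<Lambda>" and nz: "\<Lambda> \<noteq> (\<lambda>i j. 0)" and "\<not> 0 < smat n \<Lambda>"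
  hence s0: "smat n \<Lambda> = 0" by simp
  from nz obtain i j where ij: "\<Lambda> i j \<noteq> 0" by (auto simp: fun_eq_iff)
  with supp have "i < n" "j < n" unfolding mat_supported_def by (meson not_le)+
  with entry_le_smat[of i n j \<Lambda>] s0 ij show False by simp
qed

lemma piL_add: "piL n (\<lambda>i j. A i j + B i j) = (\<lambda>i. piL n A i + piL n B i)"
  by (auto simp: piL_def sum.distrib fun_eq_iff)

lemma piL_add_diff: "\<Lambda> \<in> submats N \<Longrightarrow> (\<lambda>i. piL n \<Lambda> i + piL n (\<lambda>i j. N i j - \<Lambda> i j) i) = piL n N"
proof -
  assume "\<Lambda> \<in> submats N"
  hence "(\<lambda>i j. \<Lambda> i j + (N i j - \<Lambda> i j)) = N" by (auto simp: submats_def fun_eq_iff)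
  thus ?thesis using piL_add[of n \<Lambda> "\<lambda>i j. N i j - \<Lambda> i j"] by simp
qed

lemma sidx_piL: "sidx n (piL n \<Lambda>) = 2 * smat n \<Lambda>"
proof -
  have "sidx n (piL n \<Lambda>) = (\<Sum>i<n. \<Sum>j<n. \<Lambda> i j) + (\<Sum>i<n. \<Sum>j<n. \<Lambda> j i)"
    by (simp add: sidx_def piL_def sum.distrib)
  also have "(\<Sum>i<n. \<Sum>j<n. \<Lambda> j i) = (\<Sum>i<n. \<Sum>j<n. \<Lambda> i j)" by (rule sum.swap)
  finally show ?thesis by (simp add: smat_def)
qed

lemma sidx_diff: "\<forall>i. q i \<le> p i \<Longrightarrow> sidx n (\<lambda>i. p i - q i) = sidx n p - sidx n q"
  unfolding sidx_def by (simp add: sum_subtractf_nat)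

lemma sidx_mono: "\<forall>i. q i \<le> p i \<Longrightarrow> sidx n q \<le> sidx n p"
  unfolding sidx_def by (simp add: sum_mono)

lemma smat_le_half_sidx: "\<forall>i. piL n \<Lambda> i \<le> p i \<Longrightarrow> smat n \<Lambda> \<le> sidx n p div 2"
  using sidx_mono[of "piL n \<Lambda>" p n] sidx_piL[of n \<Lambda>] by simp

lemma midx_diff: "p \<in> midx n \<Longrightarrow> (\<lambda>i. p i - q i) \<in> midx n"
  by (simp add: midx_def)

lemma sidx_diff_piL_less:
  assumes "\<forall>i. piL n \<Lambda> i \<le> p i" and "mat_supported n \<Lambda>" and "\<Lambda> \<noteq> (\<lambda>i j. 0)"
  shows "sidx n (\<lambda>i. p i - piL n \<Lambda> i) < sidx n p"
  using assms sidx_diff[of "piL n \<Lambda>" p n] sidx_piL[of n \<Lambda>] smat_pos[of n \<Lambda>]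
    sidx_mono[of "piL n \<Lambda>" p n]
  by simp

section \<open>Vandermonde convolution over index matrices\<close>

definition mat_weight :: "nat \<Rightarrow> (nat \<Rightarrow> nat \<Rightarrow> complex) \<Rightarrow> (nat \<Rightarrow> nat \<Rightarrow> nat) \<Rightarrow> complex" where
  "mat_weight n x \<Lambda> = powL n x \<Lambda> / factL n \<Lambda>"

lemma mat_weight_eq_prod_pairs:
  "mat_weight n x \<Lambda> = (\<Prod>e\<in>{..<n}\<times>{..<n}. case_prod x e ^ case_prod \<Lambda> e / fact (case_prod \<Lambda> e))"
  unfolding mat_weight_def powL_def factL_def
  by (simp add: prod.cartesian_product prod_dividef split_def)

lemma mat_weight_zero: "mat_weight n x (\<lambda>i j. 0) = 1"
  by (simp add: mat_weight_def powL_def factL_def)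

lemma prod_monom: "finite A \<Longrightarrow> (\<Prod>e\<in>A. monom (a e) (g e)) = monom (\<Prod>e\<in>A. a e) (\<Sum>e\<in>A. g e)"
  by (induction A rule: finite_induct) (auto simp: mult_monom)

lemma prod_smult: "(\<Prod>e\<in>A. smult (c e) (p e)) = smult (\<Prod>e\<in>A. c e) (\<Prod>e\<in>A. p e)"
  by (induction A rule: infinite_finite_induct) (auto simp: mult_smult_left mult_smult_right mult_ac)

lemma coeff_linear_power_ge: "m < t \<Longrightarrow> coeff ([:1, 1:] ^ m :: complex poly) t = 0"
  by (intro coeff_eq_0) (metis degree_linear_power)

lemma sum_monom_binomial:
  fixes x :: complex
  shows "(\<Sum>l\<le>m. monom (x ^ l / fact l * (x ^ (m - l) / fact (m - l))) l) = smult (x ^ m / fact m) ([:1, 1:] ^ m)"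
proof (rule poly_eqI)
  fix t
  show "coeff (\<Sum>l\<le>m. monom (x ^ l / fact l * (x ^ (m - l) / fact (m - l))) l) t =
        coeff (smult (x ^ m / fact m) ([:1, 1:] ^ m)) t"
  proof (cases "t \<le> m")
    case True
    have "x ^ t / fact t * (x ^ (m - t) / fact (m - t)) = x ^ m / fact m * of_nat (m choose t)"
      using True by (simp add: binomial_fact power_add[symmetric] field_simps)
    thus ?thesis using True by (simp add: coeff_sum coeff_monom coeff_linear_poly_power)
  next
    case False
    thus ?thesis by (simp add: coeff_sum coeff_monom coeff_linear_power_ge)
  qed
qed

lemma bij_betw_mat_of_pairs:
  assumes "mat_supported n N"
  shows "bij_betw (mat_of_pairs n) (PiE ({..<n}\<times>{..<n}) (\<lambda>e. {..case_prod N e})) (submats N)"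
proof (rule bij_betw_byWitness[where f'="\<lambda>\<Lambda>. restrict (case_prod \<Lambda>) ({..<n}\<times>{..<n})"])
  show "\<forall>g\<in>PiE ({..<n}\<times>{..<n}) (\<lambda>e. {..case_prod N e}).
          restrict (case_prod (mat_of_pairs n g)) ({..<n}\<times>{..<n}) = g"
    by (auto simp: mat_of_pairs_def fun_eq_iff PiE_def extensional_def)
  show "\<forall>\<Lambda>\<in>submats N. mat_of_pairs n (restrict (case_prod \<Lambda>) ({..<n}\<times>{..<n})) = \<Lambda>"
    using assms by (auto simp: mat_of_pairs_def fun_eq_iff submats_def mat_supported_def)
      (metis le_zero_eq not_le)+
  show "mat_of_pairs n ` PiE ({..<n}\<times>{..<n}) (\<lambda>e. {..case_prod N e}) \<subseteq> submats N"
    using assms by (auto simp: mat_of_pairs_def submats_def mat_supported_def PiE_def Pi_def)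
  show "(\<lambda>\<Lambda>. restrict (case_prod \<Lambda>) ({..<n}\<times>{..<n})) ` submats N
          \<subseteq> PiE ({..<n}\<times>{..<n}) (\<lambda>e. {..case_prod N e})"
    unfolding submats_def by (intro image_subsetI, subst restrict_PiE_iff) auto
qed

text \<open>The generating polynomial of the convolution factors over the entries, each entry
  contributing a binomial expansion.\<close>

lemma sum_submats_monom:
  assumes N: "mat_supported n N"
  shows "(\<Sum>\<Lambda>\<in>submats N. monom (mat_weight n x \<Lambda> * mat_weight n x (\<lambda>i j. N i j - \<Lambda> i j)) (smat n \<Lambda>))
         = smult (mat_weight n x N) ([:1, 1:] ^ smat n N)"
proof -
  let ?E = "{..<n}\<times>{..<n}"
  let ?F = "\<lambda>e l. monom (case_prod x e ^ l / fact l *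
              (case_prod x e ^ (case_prod N e - l) / fact (case_prod N e - l))) l"
  have "(\<Sum>\<Lambda>\<in>submats N. monom (mat_weight n x \<Lambda> * mat_weight n x (\<lambda>i j. N i j - \<Lambda> i j)) (smat n \<Lambda>))
        = (\<Sum>g\<in>PiE ?E (\<lambda>e. {..case_prod N e}). monom (mat_weight n x (mat_of_pairs n g) *
             mat_weight n x (\<lambda>i j. N i j - mat_of_pairs n g i j)) (smat n (mat_of_pairs n g)))"
    by (rule sum.reindex_bij_betw[OF bij_betw_mat_of_pairs[OF N], symmetric])
  also have "\<dots> = (\<Sum>g\<in>PiE ?E (\<lambda>e. {..case_prod N e}). \<Prod>e\<in>?E. ?F e (g e))"
  proof (rule sum.cong[OF refl])
    fix g
    have "mat_weight n x (mat_of_pairs n g) * mat_weight n x (\<lambda>i j. N i j - mat_of_pairs n g i j) =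
       (\<Prod>e\<in>?E. case_prod x e ^ g e / fact (g e) *
          (case_prod x e ^ (case_prod N e - g e) / fact (case_prod N e - g e)))"
      unfolding mat_weight_eq_prod_pairs prod.distrib[symmetric]
      by (rule prod.cong[OF refl]) (auto simp: mat_of_pairs_def)
    moreover have "smat n (mat_of_pairs n g) = (\<Sum>e\<in>?E. g e)"
      unfolding smat_eq_sum_pairs by (rule sum.cong[OF refl]) (auto simp: mat_of_pairs_def)
    ultimately show "monom (mat_weight n x (mat_of_pairs n g) *
        mat_weight n x (\<lambda>i j. N i j - mat_of_pairs n g i j)) (smat n (mat_of_pairs n g))
        = (\<Prod>e\<in>?E. ?F e (g e))"
      by (simp add: prod_monom)
  qed
  also have "\<dots> = (\<Prod>e\<in>?E. \<Sum>l\<in>{..case_prod N e}. ?F e l)"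
    by (rule prod_sum_PiE[symmetric]) auto
  also have "\<dots> = (\<Prod>e\<in>?E. smult (case_prod x e ^ case_prod N e / fact (case_prod N e))
                               ([:1, 1:] ^ case_prod N e))"
    by (rule prod.cong[OF refl]) (rule sum_monom_binomial)
  also have "\<dots> = smult (mat_weight n x N) ([:1, 1:] ^ smat n N)"
    by (simp add: prod_smult mat_weight_eq_prod_pairs smat_eq_sum_pairs power_sum)
  finally show ?thesis .
qed

lemma sum_submats_smat_eq:
  assumes N: "mat_supported n N"
  shows "(\<Sum>\<Lambda>\<in>{\<Lambda>\<in>submats N. smat n \<Lambda> = t}. mat_weight n x \<Lambda> * mat_weight n x (\<lambda>i j. N i j - \<Lambda> i j))
         = mat_weight n x N * of_nat (smat n N choose t)"
proof -
  have "coeff (\<Sum>\<Lambda>\<in>submats N. monom (mat_weight n x \<Lambda> * mat_weight n x (\<lambda>i j. N i j - \<Lambda> i j))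
                 (smat n \<Lambda>)) t
      = (\<Sum>\<Lambda>\<in>{\<Lambda>\<in>submats N. smat n \<Lambda> = t}. mat_weight n x \<Lambda> * mat_weight n x (\<lambda>i j. N i j - \<Lambda> i j))"
    by (simp add: coeff_sum coeff_monom sum.inter_filter[OF finite_submats[OF N], symmetric] eq_commute)
  moreover have "coeff (smult (mat_weight n x N) ([:1, 1:] ^ smat n N)) t
                   = mat_weight n x N * of_nat (smat n N choose t)"
    by (cases "t \<le> smat n N") (simp_all add: coeff_linear_poly_power coeff_linear_power_ge)
  ultimately show ?thesis using sum_submats_monom[OF N, of x] by simp
qed

lemma sum_submats_convolution:
  fixes f :: "nat \<Rightarrow> complex"
  assumes N: "mat_supported n N"
  shows "(\<Sum>\<Lambda>\<in>submats N. mat_weight n x \<Lambda> * mat_weight n x (\<lambda>i j. N i j - \<Lambda> i j) * f (smat n \<Lambda>))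
         = mat_weight n x N * (\<Sum>t\<le>smat n N. of_nat (smat n N choose t) * f t)"
proof -
  have img: "smat n ` submats N \<subseteq> {..smat n N}"
    using submats_subset_mats[OF N] by (auto simp: mats_def)
  have "(\<Sum>\<Lambda>\<in>submats N. mat_weight n x \<Lambda> * mat_weight n x (\<lambda>i j. N i j - \<Lambda> i j) * f (smat n \<Lambda>))
     = (\<Sum>t\<le>smat n N. \<Sum>\<Lambda>\<in>{\<Lambda>\<in>submats N. smat n \<Lambda> = t}.
          mat_weight n x \<Lambda> * mat_weight n x (\<lambda>i j. N i j - \<Lambda> i j) * f (smat n \<Lambda>))"
    by (rule sum.group[OF finite_submats[OF N] finite_atMost img, symmetric])
  also have "\<dots> = (\<Sum>t\<le>smat n N. (\<Sum>\<Lambda>\<in>{\<Lambda>\<in>submats N. smat n \<Lambda> = t}.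
          mat_weight n x \<Lambda> * mat_weight n x (\<lambda>i j. N i j - \<Lambda> i j)) * f t)"
    by (rule sum.cong[OF refl]) (simp add: sum_distrib_right)
  also have "\<dots> = mat_weight n x N * (\<Sum>t\<le>smat n N. of_nat (smat n N choose t) * f t)"
    by (simp add: sum_submats_smat_eq[OF N] sum_distrib_left mult_ac)
  finally show ?thesis .
qed

text \<open>\<open>D_coeff k (s(p)) (s(\<Lambda>))\<close> is the product of the \<open>k + m\<close> over
  \<open>\<lambda>' \<le> m \<le> s(p) - 2 - s(\<Lambda>)\<close> in the definition of \<open>D\<^sub>k\<^sub>,\<^sub>p\<close>.\<close>

definition D_coeff :: "real \<Rightarrow> nat \<Rightarrow> nat \<Rightarrow> complex" where
  "D_coeff k P t = (\<Prod>m\<in>{(int P - 1) div 2..int P - 2 - int t}. of_real k + of_int m)"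

definition prod_k_upto :: "real \<Rightarrow> int \<Rightarrow> complex" where
  "prod_k_upto k y = (\<Prod>m\<in>{0..y}. of_real k + of_int m)"

lemma k_plus_nonneg_nonzero:
  assumes "\<forall>N::nat. k \<noteq> - real N" and "0 \<le> m"
  shows "(of_real k + of_int m :: complex) \<noteq> 0"
proof
  assume "(of_real k + of_int m :: complex) = 0"
  hence "of_real k = (- of_int m :: complex)" by (simp add: add_eq_0_iff)
  hence "k = - real_of_int m" by (metis of_real_eq_iff of_real_minus of_real_of_int_eq)
  hence "k = - real (nat m)" using assms(2) by simp
  with assms(1) show False by blast
qed

lemma prod_k_upto_nonzero: "\<forall>N::nat. k \<noteq> - real N \<Longrightarrow> prod_k_upto k y \<noteq> 0"
  unfolding prod_k_upto_def by (subst prod_zero_iff) (auto dest: k_plus_nonneg_nonzero)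

lemma D_coeff_0_nonzero:
  assumes knz: "\<forall>N::nat. k \<noteq> - real N"
  shows "D_coeff k P 0 \<noteq> 0"
proof -
  have "of_real k + of_int m \<noteq> (0::complex)" if "m \<in> {(int P - 1) div 2..int P - 2 - int 0}" for m
  proof -
    from that have "0 \<le> m" by (cases P) auto
    thus ?thesis by (rule k_plus_nonneg_nonzero[OF knz])
  qed
  thus ?thesis unfolding D_coeff_def by (subst prod_zero_iff) auto
qed

lemma prod_k_range:
  assumes knz: "\<forall>N::nat. k \<noteq> - real N" and "0 \<le> x" "x \<le> y + 1"
  shows "(\<Prod>m\<in>{x..y}. of_real k + of_int m) = prod_k_upto k y / prod_k_upto k (x - 1)"
proof -
  have "{0..y} = {0..x-1} \<union> {x..y}" using assms by auto
  hence "prod_k_upto k y = prod_k_upto k (x - 1) * (\<Prod>m\<in>{x..y}. of_real k + of_int m)"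
    unfolding prod_k_upto_def by (simp add: prod.union_disjoint[symmetric] ivl_disj_int)
  thus ?thesis using prod_k_upto_nonzero[OF knz, of "x - 1"] by (simp add: field_simps)
qed

lemma pochhammer_eq_prod_range:
  "pochhammer (of_real k + of_int A :: complex) len = (\<Prod>m\<in>{A..A + int len - 1}. of_real k + of_int m)"
proof -
  have "pochhammer (of_real k + of_int A :: complex) len = (\<Prod>i\<in>{0..<len}. of_real k + of_int A + of_nat i)"
    by (simp add: pochhammer_prod)
  also have "\<dots> = (\<Prod>m\<in>{A..A + int len - 1}. of_real k + of_int m)"
    by (rule prod.reindex_bij_witness[where i="\<lambda>m. nat (m - A)" and j="\<lambda>i. A + int i"]) auto
  finally show ?thesis .
qed

lemma pochhammer_Suc_diff:
  "pochhammer (x::complex) (Suc m) - pochhammer (x - 1) (Suc m) = of_nat (Suc m) * pochhammer x m"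
proof -
  have "pochhammer (x - 1) (Suc m) = (x - 1) * pochhammer x m"
    by (simp add: pochhammer_rec)
  moreover have "pochhammer x (Suc m) = (x + of_nat m) * pochhammer x m"
    by (simp add: pochhammer_rec')
  ultimately show ?thesis by (simp add: algebra_simps)
qed

lemma alternating_binomial_sum_Suc:
  fixes f :: "nat \<Rightarrow> complex"
  shows "(\<Sum>u\<le>Suc r. (-1)^u * of_nat (Suc r choose u) * f u)
           = (\<Sum>u\<le>r. (-1)^u * of_nat (r choose u) * (f u - f (Suc u)))"
proof -
  have "(\<Sum>u\<le>Suc r. (-1)^u * of_nat (Suc r choose u) * f u)
      = f 0 + (\<Sum>u\<le>r. (-1)^(Suc u) * of_nat (Suc r choose Suc u) * f (Suc u))"
    by (subst sum.atMost_Suc_shift) simp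
  also have "\<dots> = f 0 + (\<Sum>u\<le>r. (-1)^(Suc u) * of_nat (r choose u) * f (Suc u))
                    + (\<Sum>u\<le>r. (-1)^(Suc u) * of_nat (r choose Suc u) * f (Suc u))"
    by (simp add: sum.distrib[symmetric] algebra_simps)
  also have "(\<Sum>u\<le>r. (-1)^(Suc u) * of_nat (r choose Suc u) * f (Suc u))
      = (\<Sum>u\<le>Suc r. (-1)^u * of_nat (r choose u) * f u) - f 0"
    using sum.atMost_Suc_shift[of "\<lambda>u. (-1)^u * of_nat (r choose u) * f u" r] by simp
  also have "(\<Sum>u\<le>Suc r. (-1)^u * of_nat (r choose u) * f u) = (\<Sum>u\<le>r. (-1)^u * of_nat (r choose u) * f u)"
    by simp
  finally show ?thesis by (simp add: sum_subtractf sum_negf algebra_simps)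
qed

text \<open>An \<open>r\<close>-th finite difference kills polynomials of degree \<open>< r\<close>.\<close>

lemma alternating_binomial_sum_pochhammer:
  "m < r \<Longrightarrow> (\<Sum>u\<le>r. (-1)^u * of_nat (r choose u) * pochhammer (y - of_nat u :: complex) m) = 0"
proof (induction r arbitrary: m)
  case 0 thus ?case by simp
next
  case (Suc r)
  have "(\<Sum>u\<le>Suc r. (-1)^u * of_nat (Suc r choose u) * pochhammer (y - of_nat u :: complex) m)
     = (\<Sum>u\<le>r. (-1)^u * of_nat (r choose u) *
          (pochhammer (y - of_nat u :: complex) m - pochhammer (y - of_nat (Suc u)) m))"
    by (rule alternating_binomial_sum_Suc)
  also have "\<dots> = 0"
  proof (cases m)
    case 0 thus ?thesis by simp
  next
    case (Suc m')
    have "pochhammer (y - of_nat u :: complex) m - pochhammer (y - of_nat (Suc u)) m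
            = of_nat m * pochhammer (y - of_nat u) m'" for u
      using pochhammer_Suc_diff[of "y - of_nat u" m'] Suc by (simp add: algebra_simps)
    hence "(\<Sum>u\<le>r. (-1)^u * of_nat (r choose u) *
              (pochhammer (y - of_nat u :: complex) m - pochhammer (y - of_nat (Suc u)) m))
        = of_nat m * (\<Sum>u\<le>r. (-1)^u * of_nat (r choose u) * pochhammer (y - of_nat u) m')"
      by (simp add: sum_distrib_left mult_ac)
    also have "\<dots> = 0" using Suc.IH[of m'] Suc.prems Suc by simp
    finally show ?thesis .
  qed
  finally show ?case .
qed

lemma D_coeff_mult_pochhammer:
  assumes knz: "\<forall>N::nat. k \<noteq> - real N" and t: "j \<le> t" "t \<le> S" and jS: "j < S"
    and SP: "S \<le> P div 2"
  defines "y \<equiv> of_real k + of_nat P - of_nat S :: complex"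
  shows "D_coeff k P t * pochhammer (y - of_nat (t - j)) (t - j)
           = prod_k_upto k (int P - int S - 1) / prod_k_upto k ((int P - 1) div 2 - 1)
             * pochhammer (y - of_nat (t - j)) (S - 1 - j)"
proof -
  define l' where "l' = (int P - 1) div 2"
  have l'0: "0 \<le> l'" using jS SP by (simp add: l'_def)
  have l'S: "l' \<le> int P - int S" using SP unfolding l'_def by linarith
  have ty: "y - of_nat (t - j) = of_real k + of_int (int P - int S - int (t - j))"
    by (simp add: y_def)
  have b0: "0 \<le> int P - int S - int (t - j)" using t SP by auto
  have c1: "D_coeff k P t = prod_k_upto k (int P - 2 - int t) / prod_k_upto k (l' - 1)"
    unfolding D_coeff_def l'_def[symmetric] using t SP l'0 l'S
    by (subst prod_k_range[OF knz]) (auto simp: l'_def)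
  have c2: "pochhammer (y - of_nat (t - j)) (t - j)
      = prod_k_upto k (int P - int S - 1) / prod_k_upto k (int P - int S - int (t - j) - 1)"
    unfolding ty pochhammer_eq_prod_range using t b0
    by (subst prod_k_range[OF knz]) (auto simp: of_nat_diff)
  have c3: "pochhammer (y - of_nat (t - j)) (S - 1 - j)
      = prod_k_upto k (int P - 2 - int t) / prod_k_upto k (int P - int S - int (t - j) - 1)"
    unfolding ty pochhammer_eq_prod_range using t b0 jS
    by (subst prod_k_range[OF knz]) (auto simp: of_nat_diff algebra_simps)
  show ?thesis unfolding c1 c2 c3 l'_def by simp
qed

lemma sum_D_coeff_pochhammer:
  assumes knz: "\<forall>N::nat. k \<noteq> - real N" and jS: "j \<le> S" and SP: "S \<le> P div 2"
  shows "(\<Sum>t\<in>{j..S}. of_nat (S choose t) * of_nat (t choose j) * (-1)^(t-j) * D_coeff k P t *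
            pochhammer (of_real k + of_nat P - of_nat S - of_nat (t - j)) (t - j))
         = (if j = S then D_coeff k P S else 0)"
proof (cases "j = S")
  case True thus ?thesis by simp
next
  case False
  hence jS': "j < S" using jS by simp
  define y where "y = (of_real k + of_nat P - of_nat S :: complex)"
  define C where "C = prod_k_upto k (int P - int S - 1) / prod_k_upto k ((int P - 1) div 2 - 1)"
  have "(\<Sum>t\<in>{j..S}. of_nat (S choose t) * of_nat (t choose j) * (-1)^(t-j) * D_coeff k P t *
            pochhammer (y - of_nat (t - j)) (t - j))
      = C * of_nat (S choose j) * (\<Sum>t\<in>{j..S}. (-1)^(t-j) * of_nat ((S - j) choose (t - j)) *
            pochhammer (y - of_nat (t - j)) (S - j - 1))"
    unfolding sum_distrib_left
  proof (rule sum.cong[OF refl])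
    fix t assume t: "t \<in> {j..S}"
    have "of_nat (S choose t) * of_nat (t choose j)
            = (of_nat (S choose j) * of_nat ((S - j) choose (t - j)) :: complex)"
      using choose_mult[of j t S] t by (simp flip: of_nat_mult)
    moreover have "D_coeff k P t * pochhammer (y - of_nat (t - j)) (t - j)
                     = C * pochhammer (y - of_nat (t - j)) (S - 1 - j)"
      using D_coeff_mult_pochhammer[OF knz _ _ jS' SP, of t] t
      unfolding y_def[symmetric] C_def[symmetric] by simp
    moreover have "S - 1 - j = S - j - 1" by simp
    ultimately show "of_nat (S choose t) * of_nat (t choose j) * (-1)^(t-j) * D_coeff k P t *
            pochhammer (y - of_nat (t - j)) (t - j)
         = C * of_nat (S choose j) * ((-1)^(t-j) * of_nat ((S - j) choose (t - j)) *
            pochhammer (y - of_nat (t - j)) (S - j - 1))"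
      by (simp add: mult_ac)
  qed
  also have "(\<Sum>t\<in>{j..S}. (-1)^(t-j) * of_nat ((S - j) choose (t - j)) *
                pochhammer (y - of_nat (t - j)) (S - j - 1))
      = (\<Sum>u\<le>S - j. (-1)^u * of_nat ((S - j) choose u) * pochhammer (y - of_nat u) (S - j - 1))"
  proof -
    have "{j..S} = {0 + j..(S - j) + j}" using jS by simp
    thus ?thesis by (simp only: sum.shift_bounds_cl_nat_ivl) (simp add: atLeast0AtMost)
  qed
  also have "\<dots> = 0" by (rule alternating_binomial_sum_pochhammer) (use jS' in simp)
  finally show ?thesis using False by (simp add: y_def)
qed

lemma mob_denom_nonzero:
  assumes det: "a * d - b * c = 1" and \<tau>: "\<tau> \<in> uhp"
  shows "of_int c * \<tau> + of_int d \<noteq> (0::complex)"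
proof
  assume z: "of_int c * \<tau> + of_int d = (0::complex)"
  hence "Im (of_int c * \<tau> + of_int d) = 0" by simp
  hence "c = 0" using \<tau> by (simp add: uhp_def)
  with z have "d = 0" by simp
  with det \<open>c = 0\<close> show False by simp
qed

lemma Im_mob:
  assumes det: "a * d - b * c = 1"
  shows "Im (mob (a, b, c, d) \<tau>) = Im \<tau> / (cmod (of_int c * \<tau> + of_int d))^2"
proof -
  have "Im (mob (a, b, c, d) \<tau>)
      = (of_int a * Im \<tau> * (of_int c * Re \<tau> + of_int d) - (of_int a * Re \<tau> + of_int b) * (of_int c * Im \<tau>))
        / (cmod (of_int c * \<tau> + of_int d))^2"
    by (simp add: Im_divide cmod_power2)
  also have "of_int a * Im \<tau> * (of_int c * Re \<tau> + of_int d) - (of_int a * Re \<tau> + of_int b) * (of_int c * Im \<tau>)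
     = real_of_int (a * d - b * c) * Im \<tau>" by (simp add: algebra_simps)
  finally show ?thesis using det by simp
qed

lemma mob_in_uhp: "a * d - b * c = 1 \<Longrightarrow> \<tau> \<in> uhp \<Longrightarrow> mob (a, b, c, d) \<tau> \<in> uhp"
  using Im_mob[of a d b c \<tau>] mob_denom_nonzero[of a d b c \<tau>] by (simp add: uhp_def)

lemma open_uhp: "open uhp"
  unfolding uhp_def by (simp add: open_Collect_less continuous_on_Im continuous_on_const)

lemma has_field_derivative_mob:
  assumes det: "a * d - b * c = 1" and \<tau>: "\<tau> \<in> uhp"
  shows "(mob (a, b, c, d) has_field_derivative 1 / (of_int c * \<tau> + of_int d)^2) (at \<tau>)"
proof -
  have z: "of_int c * \<tau> + of_int d \<noteq> (0::complex)" by (rule mob_denom_nonzero[OF det \<tau>])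
  have "((\<lambda>\<sigma>. (of_int a * \<sigma> + of_int b) / (of_int c * \<sigma> + of_int d)) has_field_derivative
     (of_int a * (of_int c * \<tau> + of_int d) - (of_int a * \<tau> + of_int b) * of_int c)
       / (of_int c * \<tau> + of_int d)^2) (at \<tau>)"
    using z by (auto intro!: derivative_eq_intros simp: power2_eq_square)
  moreover have "of_int a * (of_int c * \<tau> + of_int d) - (of_int a * \<tau> + of_int b) * of_int c
                   = (of_int (a * d - b * c) :: complex)"
    by (simp add: algebra_simps)
  moreover have "mob (a, b, c, d) = (\<lambda>\<sigma>. (of_int a * \<sigma> + of_int b) / (of_int c * \<sigma> + of_int d))"
    by (simp add: fun_eq_iff)
  ultimately show ?thesis using det by simp
qed

lemma holomorphic_on_mob: "a * d - b * c = 1 \<Longrightarrow> mob (a, b, c, d) holomorphic_on uhp"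
  unfolding holomorphic_on_def field_differentiable_def
  by (meson has_field_derivative_mob has_field_derivative_at_within)

lemma has_field_derivative_mob_denom_powr:
  assumes \<tau>: "\<tau> \<in> uhp"
  shows "((\<lambda>\<sigma>. (of_int c * \<sigma> + of_int d) powr w) has_field_derivative
           w * of_int c * (of_int c * \<tau> + of_int d) powr (w - 1)) (at \<tau>)"
proof (cases "c = 0")
  case True thus ?thesis by simp
next
  case False
  have "of_int c * \<tau> + of_int d \<notin> \<real>\<^sub>\<le>\<^sub>0"
  proof
    assume "of_int c * \<tau> + of_int d \<in> \<real>\<^sub>\<le>\<^sub>0"
    hence "Im (of_int c * \<tau> + of_int d) = 0" by (metis Im_complex_of_real nonpos_Reals_cases)
    thus False using False \<tau> by (simp add: uhp_def)
  qed
  thus ?thesis by (auto intro!: derivative_eq_intros simp: mult_ac)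
qed

lemma holomorphic_on_mob_denom_powr: "(\<lambda>\<sigma>. (of_int c * \<sigma> + of_int d) powr w) holomorphic_on uhp"
  unfolding holomorphic_on_def field_differentiable_def
  using has_field_derivative_mob_denom_powr has_field_derivative_at_within by blast

lemma holomorphic_on_slash_term:
  assumes det: "a * d - b * c = 1" and F: "F holomorphic_on uhp"
  shows "(\<lambda>\<sigma>. (of_int c * \<sigma> + of_int d) powr w * F (mob (a, b, c, d) \<sigma>)) holomorphic_on uhp"
proof -
  have "(F \<circ> mob (a, b, c, d)) holomorphic_on uhp"
    using holomorphic_on_compose_gen[OF holomorphic_on_mob[OF det] F] mob_in_uhp[OF det] by blast
  from holomorphic_on_mult[OF holomorphic_on_mob_denom_powr this] show ?thesis by (simp add: o_def)
qed

lemma csqrt_powr_double: "z \<noteq> 0 \<Longrightarrow> csqrt z powr (2 * K) = z powr K"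
proof -
  assume z: "z \<noteq> 0"
  have "csqrt z = exp (Ln z / 2)" using z by (simp add: csqrt_exp_Ln)
  moreover have "- pi < Im (Ln z / 2)" "Im (Ln z / 2) \<le> pi"
    using mpi_less_Im_Ln[OF z] Im_Ln_le_pi[OF z] pi_gt_zero by auto
  ultimately have L: "Ln (csqrt z) = Ln z / 2" by (simp add: Ln_exp)
  show ?thesis using z by (simp add: powr_def L)
qed

text \<open>\<open>Ln (-w)\<close> is \<open>Ln w \<plusminus> i\<pi>\<close> depending on the half-plane of \<open>w\<close>; both choices give the
  same power because \<open>2(k + s)\<close> is an integer.\<close>

lemma minus_powr_half_integer:
  fixes w :: complex
  assumes w: "w \<noteq> 0" and k: "k = of_int m / 2"
  shows "(- w) powr (- 2 * (of_real k + of_nat s))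
           = w powr (- 2 * (of_real k + of_nat s)) * (-1) powr complex_of_real (- 2 * k)"
proof -
  define K where "K = (of_real k + of_nat s :: complex)"
  have shift: "exp (x + 2 * of_int l * pi * \<i>) = exp x" for x and l :: int
    using exp_integer_2pi[of "of_int l"] by (simp add: exp_add)
  have lhs: "(- w) powr (- 2 * K) = exp (- 2 * K * Ln (- w))" using w by (simp add: powr_def)
  have "(- w) powr (- 2 * K) = exp (- 2 * K * Ln w + (- 2 * of_real k * (\<i> * of_real pi)))"
  proof (cases "Im w \<le> 0 \<and> \<not> (Re w < 0 \<and> Im w = 0)")
    case True
    hence L: "Ln (- w) = Ln w + \<i> * pi" using Ln_minus[OF w] by simp
    have "(- w) powr (- 2 * K)
        = exp (- 2 * K * Ln w + (- 2 * of_real k * (\<i> * of_real pi)) + 2 * of_int (- int s) * pi * \<i>)"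
      unfolding lhs L by (simp add: K_def algebra_simps)
    thus ?thesis by (simp only: shift)
  next
    case False
    hence L: "Ln (- w) = Ln w - \<i> * pi" using Ln_minus[OF w] by simp
    have "(- w) powr (- 2 * K)
        = exp (- 2 * K * Ln w + (- 2 * of_real k * (\<i> * of_real pi)) + 2 * of_int (m + int s) * pi * \<i>)"
      unfolding lhs L by (simp add: K_def k algebra_simps)
    thus ?thesis by (simp only: shift)
  qed
  thus ?thesis using w by (simp add: K_def powr_def exp_diff exp_minus divide_inverse)
qed

lemma metaplectic_factor_powr:
  fixes e :: int and z :: complex
  assumes e: "e = 1 \<or> e = -1" and z: "z \<noteq> 0" and k: "\<exists>m::int. k = of_int m / 2"
  shows "(of_int e * csqrt z) powr (complex_of_real (- 2 * (k + real s)))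
         = (of_int e) powr (complex_of_real (- 2 * k)) * z powr (- (of_real k + of_nat s))"
proof -
  have sq: "csqrt z powr (- 2 * (of_real k + of_nat s)) = z powr (- (of_real k + of_nat s))"
    using csqrt_powr_double[OF z, of "- (of_real k + of_nat s)"] by simp
  obtain m :: int where m: "k = of_int m / 2" using k by blast
  have "csqrt z \<noteq> 0" using z by simp
  from minus_powr_half_integer[OF this m, of s] sq e show ?thesis
    by (auto simp: mult.commute)
qed

section \<open>Higher derivatives of a slashed function\<close>

definition slash_deriv_coeff :: "complex \<Rightarrow> int \<Rightarrow> nat \<Rightarrow> nat \<Rightarrow> complex" where
  "slash_deriv_coeff \<beta> c r j = of_nat (r choose j) * pochhammer (\<beta> + of_nat j) (r - j) * (- of_int c) ^ (r - j)"

lemma slash_deriv_coeff_Suc_Suc: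
  assumes j: "Suc j \<le> r"
  shows "slash_deriv_coeff \<beta> c (Suc r) (Suc j)
           = slash_deriv_coeff \<beta> c r (Suc j) * (- (\<beta> + of_nat r + of_nat (Suc j))) * of_int c
             + slash_deriv_coeff \<beta> c r j"
proof -
  define P where "P = pochhammer (\<beta> + of_nat (Suc j)) (r - Suc j)"
  have p1: "pochhammer (\<beta> + of_nat (Suc j)) (Suc r - Suc j) = (\<beta> + of_nat r) * P"
  proof -
    have "Suc r - Suc j = Suc (r - Suc j)" using j by simp
    thus ?thesis unfolding P_def using j by (simp add: pochhammer_rec' of_nat_diff)
  qed
  have p2: "pochhammer (\<beta> + of_nat j) (r - j) = (\<beta> + of_nat j) * P"
  proof -
    have "r - j = Suc (r - Suc j)" using j by simp
    thus ?thesis unfolding P_def by (simp add: pochhammer_rec add_ac)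
  qed
  have e1: "(- of_int c :: complex) ^ (r - j) = (- of_int c) ^ (r - Suc j) * (- of_int c)"
  proof -
    have "r - j = Suc (r - Suc j)" using j by simp
    thus ?thesis by (simp only: power_Suc2)
  qed
  have b: "(of_nat (r - j) * of_nat (r choose j) :: complex) = of_nat (Suc j) * of_nat (r choose Suc j)"
    by (metis binomial_absorption binomial_absorb_comp of_nat_mult)
  have rj: "(of_nat (r - j) :: complex) = of_nat r - of_nat j"
    using j by (simp add: of_nat_diff)
  have "of_nat (Suc r choose Suc j) * (\<beta> + of_nat r)
          = (of_nat (r choose Suc j) * (\<beta> + of_nat r + of_nat (Suc j))
             + of_nat (r choose j) * (\<beta> + of_nat j) :: complex)"
    using b rj by (simp add: algebra_simps)
  hence "slash_deriv_coeff \<beta> c (Suc r) (Suc j)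
      = (of_nat (r choose Suc j) * (\<beta> + of_nat r + of_nat (Suc j)) + of_nat (r choose j) * (\<beta> + of_nat j))
        * P * (- of_int c) ^ (r - Suc j) * (- of_int c)"
    unfolding slash_deriv_coeff_def p1 by (simp add: e1 mult_ac)
  thus ?thesis unfolding slash_deriv_coeff_def p2 e1 P_def by (simp add: algebra_simps)
qed

lemma slash_deriv_coeff_Suc:
  "slash_deriv_coeff \<beta> c (Suc r) j
     = (if j \<le> r then slash_deriv_coeff \<beta> c r j * (- (\<beta> + of_nat r + of_nat j)) * of_int c else 0)
       + (if j = 0 then 0 else slash_deriv_coeff \<beta> c r (j - 1))"
proof (cases j)
  case 0
  thus ?thesis by (simp add: slash_deriv_coeff_def pochhammer_rec' algebra_simps)
next
  case (Suc j')
  consider "j \<le> r" | "j = Suc r" | "Suc r < j" by linarith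
  thus ?thesis
  proof cases
    case 1 thus ?thesis using Suc slash_deriv_coeff_Suc_Suc[of j' r] by simp
  next
    case 2 thus ?thesis using Suc by (simp add: slash_deriv_coeff_def)
  next
    case 3 thus ?thesis using Suc by (simp add: slash_deriv_coeff_def binomial_eq_0)
  qed
qed

lemma sum_slash_deriv_coeff_Suc:
  "(\<Sum>j\<le>r. slash_deriv_coeff \<beta> c r j * (- (\<beta> + of_nat r + of_nat j)) * of_int c * X j
           + slash_deriv_coeff \<beta> c r j * X (Suc j))
   = (\<Sum>j\<le>Suc r. slash_deriv_coeff \<beta> c (Suc r) j * X j)"
proof -
  have "(\<Sum>j\<le>Suc r. slash_deriv_coeff \<beta> c (Suc r) j * X j)
     = (\<Sum>j\<le>Suc r. (if j \<le> r then slash_deriv_coeff \<beta> c r j * (- (\<beta> + of_nat r + of_nat j)) * of_int c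
                      else 0) * X j)
       + (\<Sum>j\<le>Suc r. (if j = 0 then 0 else slash_deriv_coeff \<beta> c r (j - 1)) * X j)"
    by (simp add: slash_deriv_coeff_Suc distrib_right sum.distrib)
  also have "(\<Sum>j\<le>Suc r. (if j \<le> r then slash_deriv_coeff \<beta> c r j * (- (\<beta> + of_nat r + of_nat j)) * of_int c
                             else 0) * X j)
     = (\<Sum>j\<le>r. slash_deriv_coeff \<beta> c r j * (- (\<beta> + of_nat r + of_nat j)) * of_int c * X j)"
    by (simp add: sum.atMost_Suc)
  also have "(\<Sum>j\<le>Suc r. (if j = 0 then 0 else slash_deriv_coeff \<beta> c r (j - 1)) * X j)
               = (\<Sum>j\<le>r. slash_deriv_coeff \<beta> c r j * X (Suc j))"
    by (subst sum.atMost_Suc_shift) simp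
  finally show ?thesis by (simp add: sum.distrib)
qed

lemma has_field_derivative_slash_summand:
  fixes F :: "complex \<Rightarrow> complex"
  assumes det: "a * d - b * c = 1" and F: "F holomorphic_on uhp" and \<tau>: "\<tau> \<in> uhp"
  shows "((\<lambda>\<sigma>. (of_int c * \<sigma> + of_int d) powr (- \<beta> - of_nat r - of_nat j)
                * (deriv ^^ j) F (mob (a, b, c, d) \<sigma>))
           has_field_derivative
             (- (\<beta> + of_nat r + of_nat j)) * of_int c
               * (of_int c * \<tau> + of_int d) powr (- \<beta> - of_nat (Suc r) - of_nat j)
               * (deriv ^^ j) F (mob (a, b, c, d) \<tau>)
             + (of_int c * \<tau> + of_int d) powr (- \<beta> - of_nat (Suc r) - of_nat (Suc j))
               * (deriv ^^ Suc j) F (mob (a, b, c, d) \<tau>))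
         (at \<tau>)"
proof -
  define Z where "Z = of_int c * \<tau> + (of_int d :: complex)"
  define w where "w = - \<beta> - of_nat r - of_nat j"
  have Z: "Z \<noteq> 0" using mob_denom_nonzero[OF det \<tau>] by (simp add: Z_def)
  have h1: "((\<lambda>\<sigma>. (of_int c * \<sigma> + of_int d) powr w) has_field_derivative
               w * of_int c * Z powr (w - 1)) (at \<tau>)"
    unfolding Z_def by (rule has_field_derivative_mob_denom_powr[OF \<tau>])
  have h2: "((\<lambda>\<sigma>. (deriv ^^ j) F (mob (a, b, c, d) \<sigma>)) has_field_derivative
              (deriv ^^ Suc j) F (mob (a, b, c, d) \<tau>) * (1 / Z ^ 2)) (at \<tau>)"
    unfolding Z_def
    by (rule DERIV_chain2[OF has_field_derivative_higher_deriv[OF F open_uhp]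
                             has_field_derivative_mob[OF det \<tau>]])
       (use mob_in_uhp[OF det \<tau>] in simp)
  have p1: "Z powr (- \<beta> - of_nat (Suc r) - of_nat j) = Z powr (w - 1)"
    unfolding w_def by (simp add: algebra_simps)
  have p2: "Z powr (- \<beta> - of_nat (Suc r) - of_nat (Suc j)) = Z powr w * (1 / Z ^ 2)"
  proof -
    have "Z powr (- \<beta> - of_nat (Suc r) - of_nat (Suc j)) = Z powr (w - 2)"
      unfolding w_def by (simp add: algebra_simps)
    thus ?thesis by (simp only: powr_diff powr_complexnumeral) simp
  qed
  show ?thesis
    unfolding w_def[symmetric] Z_def[symmetric] p1 p2
    by (rule DERIV_cong[OF DERIV_mult[OF h1 h2]]) (simp add: w_def Z_def algebra_simps)
qed

lemma higher_deriv_slash: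
  fixes F :: "complex \<Rightarrow> complex"
  assumes det: "a * d - b * c = 1" and F: "F holomorphic_on uhp" and \<tau>: "\<tau> \<in> uhp"
  shows "(deriv ^^ r) (\<lambda>\<sigma>. (of_int c * \<sigma> + of_int d) powr (- \<beta>) * F (mob (a, b, c, d) \<sigma>)) \<tau>
     = (\<Sum>j\<le>r. slash_deriv_coeff \<beta> c r j * (of_int c * \<tau> + of_int d) powr (- \<beta> - of_nat r - of_nat j)
                * (deriv ^^ j) F (mob (a, b, c, d) \<tau>))"
  using \<tau>
proof (induction r arbitrary: \<tau>)
  case 0
  thus ?case by (simp add: slash_deriv_coeff_def)
next
  case (Suc r)
  define T where "T = (\<lambda>r \<sigma>. \<Sum>j\<le>r. slash_deriv_coeff \<beta> c r j * ((of_int c * \<sigma> + of_int d)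
                       powr (- \<beta> - of_nat r - of_nat j) * (deriv ^^ j) F (mob (a, b, c, d) \<sigma>)))"
  let ?f = "\<lambda>\<sigma>. (of_int c * \<sigma> + of_int d) powr (- \<beta>) * F (mob (a, b, c, d) \<sigma>)"
  have "\<forall>\<^sub>F \<sigma> in nhds \<tau>. (deriv ^^ r) ?f \<sigma> = T r \<sigma>"
    using eventually_nhds_in_open[OF open_uhp Suc.prems]
    by eventually_elim (use Suc.IH in \<open>simp add: T_def mult.assoc\<close>)
  hence "(deriv ^^ Suc r) ?f \<tau> = deriv (T r) \<tau>" by (simp add: deriv_cong_ev)
  also have "deriv (T r) \<tau> = T (Suc r) \<tau>"
  proof (rule DERIV_imp_deriv)
    have "(T r has_field_derivative (\<Sum>j\<le>r. slash_deriv_coeff \<beta> c r j *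
             ((- (\<beta> + of_nat r + of_nat j)) * of_int c * (of_int c * \<tau> + of_int d)
                 powr (- \<beta> - of_nat (Suc r) - of_nat j) * (deriv ^^ j) F (mob (a, b, c, d) \<tau>)
              + (of_int c * \<tau> + of_int d) powr (- \<beta> - of_nat (Suc r) - of_nat (Suc j))
                 * (deriv ^^ Suc j) F (mob (a, b, c, d) \<tau>)))) (at \<tau>)"
      unfolding T_def
      by (intro DERIV_sum DERIV_cmult has_field_derivative_slash_summand[OF det F Suc.prems])
    thus "(T r has_field_derivative T (Suc r) \<tau>) (at \<tau>)"
      unfolding T_def sum_slash_deriv_coeff_Suc[symmetric] by (simp add: algebra_simps)
  qed
  finally show ?case by (simp add: T_def mult.assoc)
qed

definition gram_coeff :: "(nat \<Rightarrow> nat \<Rightarrow> real) \<Rightarrow> nat \<Rightarrow> nat \<Rightarrow> complex" where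
  "gram_coeff G = (\<lambda>i j. - of_real pi * \<i> * of_real (G i j))"

definition shifted_coeff :: "((nat \<Rightarrow> nat) \<Rightarrow> complex \<Rightarrow> complex) \<Rightarrow> (nat \<Rightarrow> nat) \<Rightarrow> (nat \<Rightarrow> nat)
    \<Rightarrow> complex \<Rightarrow> complex" where
  "shifted_coeff hs p q = (if \<forall>i. q i \<le> p i then hs (\<lambda>i. p i - q i) else (\<lambda>_. 0))"

definition D_norm :: "nat \<Rightarrow> (nat \<Rightarrow> nat) \<Rightarrow> complex" where
  "D_norm n p = 4 ^ (sidx n p div 2) * fact (sidx n p div 2)"

definition D_scalar :: "nat \<Rightarrow> (nat \<Rightarrow> nat \<Rightarrow> real) \<Rightarrow> real \<Rightarrow> (nat \<Rightarrow> nat) \<Rightarrow>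
    ((nat \<Rightarrow> nat) \<Rightarrow> complex \<Rightarrow> complex) \<Rightarrow> complex \<Rightarrow> complex" where
  "D_scalar n G k p hs \<tau> = D_norm n p *
     (\<Sum>\<Lambda>\<in>mats n (sidx n p div 2). mat_weight n (gram_coeff G) \<Lambda> * D_coeff k (sidx n p) (smat n \<Lambda>) *
        (deriv ^^ smat n \<Lambda>) (shifted_coeff hs p (piL n \<Lambda>)) \<tau>)"

definition slash_scalar :: "nat \<Rightarrow> (nat \<Rightarrow> nat \<Rightarrow> real) \<Rightarrow> real \<Rightarrow>
    ((nat \<Rightarrow> nat) \<Rightarrow> complex \<Rightarrow> complex) \<Rightarrow> mpel \<Rightarrow> (nat \<Rightarrow> nat) \<Rightarrow> complex \<Rightarrow> complex" where
  "slash_scalar n G k hs g p \<tau> =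
     (case g of ((a, b, c, d), e) \<Rightarrow>
       (of_int e) powr (complex_of_real (- 2 * k)) *
       (\<Sum>\<Lambda>\<in>mats n (sidx n p).
          (powL n (\<lambda>i j. - of_real pi * \<i> * of_int c * of_real (G i j)) \<Lambda> / factL n \<Lambda>
           * (of_int c * \<tau> + of_int d) powr
               (- (of_real k + of_nat (sidx n p) - of_nat (smat n \<Lambda>))))
          * shifted_coeff hs p (piL n \<Lambda>) (mob (a, b, c, d) \<tau>)))"

lemma D_norm_nonzero: "D_norm n p \<noteq> 0"
  by (simp add: D_norm_def)

lemma vderiv_funpow_nth: "(vderiv ^^ m) f \<tau> $ i = (deriv ^^ m) (\<lambda>\<sigma>. f \<sigma> $ i) \<tau>"
proof (induction m arbitrary: \<tau>)
  case 0 thus ?case by simp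
next
  case (Suc m)
  have "(\<lambda>z. (vderiv ^^ m) f z $ i) = (deriv ^^ m) (\<lambda>\<sigma>. f \<sigma> $ i)" using Suc.IH by (simp add: fun_eq_iff)
  moreover have "(vderiv ^^ Suc m) f \<tau> $ i = deriv (\<lambda>z. (vderiv ^^ m) f z $ i) \<tau>"
    by (simp add: vderiv_def)
  ultimately show ?case by simp
qed

lemma coeff_sub_nth: "coeff_sub h p q \<sigma> $ i = shifted_coeff (\<lambda>j \<sigma>. h j \<sigma> $ i) p q \<sigma>"
  by (simp add: coeff_sub_def shifted_coeff_def)

lemma Dop_nth: "Dop n G k p h \<tau> $ i = D_scalar n G k p (\<lambda>j \<sigma>. h j \<sigma> $ i) \<tau>"
proof -
  have "(\<lambda>\<sigma>. coeff_sub h p q \<sigma> $ i) = shifted_coeff (\<lambda>j \<sigma>. h j \<sigma> $ i) p q" for q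
    by (simp add: coeff_sub_nth fun_eq_iff)
  thus ?thesis unfolding Dop_def D_scalar_def D_norm_def Let_def
    by (simp add: sum_component vderiv_funpow_nth mat_weight_def gram_coeff_def D_coeff_def)
qed

lemma slash_coeff_nth: "slash_coeff n G k h g p \<tau> $ i = slash_scalar n G k (\<lambda>j \<sigma>. h j \<sigma> $ i) g p \<tau>"
  unfolding slash_coeff_def slash_scalar_def
  by (simp add: sum_component coeff_sub_nth split: prod.splits)

lemma shifted_coeff_le: "\<forall>i. q i \<le> p i \<Longrightarrow> shifted_coeff hs p q = hs (\<lambda>i. p i - q i)"
  by (simp add: shifted_coeff_def)

lemma shifted_coeff_not_le: "\<not> (\<forall>i. q i \<le> p i) \<Longrightarrow> shifted_coeff hs p q = (\<lambda>_. 0)"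
  unfolding shifted_coeff_def by (rule if_not_P)

lemma shifted_coeff_shifted_coeff:
  assumes "\<forall>i. q i \<le> p i"
  shows "shifted_coeff hs (\<lambda>i. p i - q i) r = shifted_coeff hs p (\<lambda>i. q i + r i)"
proof -
  have "(\<forall>i. r i \<le> p i - q i) = (\<forall>i. q i + r i \<le> p i)"
    using assms by (metis le_diff_conv2 add.commute)
  moreover have "(\<lambda>i. p i - q i - r i) = (\<lambda>i. p i - (q i + r i))" by (simp add: fun_eq_iff)
  ultimately show ?thesis unfolding shifted_coeff_def by simp
qed

lemma shifted_coeff_sum:
  "shifted_coeff (\<lambda>q \<sigma>. \<Sum>x\<in>X. a x * f x q \<sigma>) p q' \<sigma> = (\<Sum>x\<in>X. a x * shifted_coeff (f x) p q' \<sigma>)"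
  by (cases "\<forall>i. q' i \<le> p i") (simp_all add: shifted_coeff_le shifted_coeff_not_le)

lemma holomorphic_on_shifted_coeff:
  "(\<And>j. hs j holomorphic_on S) \<Longrightarrow> shifted_coeff hs p q holomorphic_on S"
  by (simp add: shifted_coeff_def)

lemma higher_deriv_sum:
  assumes "finite X" and "\<And>x. x \<in> X \<Longrightarrow> f x holomorphic_on S" and "open S" and "\<tau> \<in> S"
  shows "(deriv ^^ r) (\<lambda>\<sigma>. \<Sum>x\<in>X. f x \<sigma>) \<tau> = (\<Sum>x\<in>X. (deriv ^^ r) (f x) \<tau>)"
  using assms
proof (induction X rule: finite_induct)
  case empty thus ?case by (simp add: higher_deriv_const)
next
  case (insert x X)
  have "(deriv ^^ r) (\<lambda>\<sigma>. f x \<sigma> + (\<Sum>x\<in>X. f x \<sigma>)) \<tau>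
          = (deriv ^^ r) (f x) \<tau> + (deriv ^^ r) (\<lambda>\<sigma>. \<Sum>x\<in>X. f x \<sigma>) \<tau>"
    by (rule higher_deriv_add) (use insert in \<open>auto intro!: holomorphic_intros\<close>)
  thus ?case using insert by simp
qed

lemma holomorphic_on_slash_scalar:
  assumes det: "a * d - b * c = 1" and hol: "\<And>j. hs j holomorphic_on uhp"
  shows "slash_scalar n G k hs ((a, b, c, d), e) q holomorphic_on uhp"
proof -
  have hT: "(\<lambda>\<sigma>. (of_int c * \<sigma> + of_int d) powr w * shifted_coeff hs q q' (mob (a, b, c, d) \<sigma>))
          holomorphic_on uhp" for w q'
    by (rule holomorphic_on_slash_term[OF det holomorphic_on_shifted_coeff[of hs, OF hol]])
  have eq: "slash_scalar n G k hs ((a, b, c, d), e) q = (\<lambda>\<sigma>. (of_int e) powr (complex_of_real (- 2 * k)) *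
       (\<Sum>\<Lambda>\<in>mats n (sidx n q).
          powL n (\<lambda>i j. - of_real pi * \<i> * of_int c * of_real (G i j)) \<Lambda> / factL n \<Lambda>
          * ((of_int c * \<sigma> + of_int d) powr (- (of_real k + of_nat (sidx n q) - of_nat (smat n \<Lambda>)))
             * shifted_coeff hs q (piL n \<Lambda>) (mob (a, b, c, d) \<sigma>))))"
    by (simp add: slash_scalar_def fun_eq_iff mult.assoc del: mob.simps)
  show ?thesis unfolding eq
    by (intro holomorphic_on_mult holomorphic_on_sum holomorphic_on_const hT)
qed

lemma holomorphic_on_D_scalar:
  assumes "\<And>j. hs j holomorphic_on uhp"
  shows "D_scalar n G k p hs holomorphic_on uhp"
  unfolding D_scalar_def[abs_def]
  by (intro holomorphic_intros holomorphic_on_shifted_coeff assms open_uhp)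

lemma D_scalar_sum:
  assumes fin: "finite X" and hol: "\<And>x j. x \<in> X \<Longrightarrow> f x j holomorphic_on uhp" and \<tau>: "\<tau> \<in> uhp"
  shows "D_scalar n G k p (\<lambda>q \<sigma>. \<Sum>x\<in>X. a x * f x q \<sigma>) \<tau> = (\<Sum>x\<in>X. a x * D_scalar n G k p (f x) \<tau>)"
proof -
  have "(deriv ^^ m) (shifted_coeff (\<lambda>q \<sigma>. \<Sum>x\<in>X. a x * f x q \<sigma>) p q') \<tau>
          = (\<Sum>x\<in>X. a x * (deriv ^^ m) (shifted_coeff (f x) p q') \<tau>)" for m q'
  proof -
    have "(deriv ^^ m) (shifted_coeff (\<lambda>q \<sigma>. \<Sum>x\<in>X. a x * f x q \<sigma>) p q') \<tau>
            = (\<Sum>x\<in>X. (deriv ^^ m) (\<lambda>\<sigma>. a x * shifted_coeff (f x) p q' \<sigma>) \<tau>)"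
      unfolding shifted_coeff_sum[abs_def]
      by (rule higher_deriv_sum[OF fin _ open_uhp \<tau>])
         (use hol holomorphic_on_shifted_coeff in \<open>auto intro!: holomorphic_intros\<close>)
    also have "\<dots> = (\<Sum>x\<in>X. a x * (deriv ^^ m) (shifted_coeff (f x) p q') \<tau>)"
      by (rule sum.cong[OF refl], rule higher_deriv_cmult[OF _ \<tau> open_uhp])
         (use hol holomorphic_on_shifted_coeff in auto)
    finally show ?thesis .
  qed
  thus ?thesis unfolding D_scalar_def
    by (simp add: sum_distrib_left sum_distrib_right mult_ac sum.swap[of _ X])
qed

lemma D_scalar_linear:
  assumes "\<And>j. f j holomorphic_on uhp" and "\<And>j. g j holomorphic_on uhp" and "\<tau> \<in> uhp"
  shows "D_scalar n G k p (\<lambda>q \<sigma>. u * f q \<sigma> + v * g q \<sigma>) \<tau> = u * D_scalar n G k p f \<tau> + v * D_scalar n G k p g \<tau>"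
proof -
  have "D_scalar n G k p (\<lambda>q \<sigma>. \<Sum>x\<in>UNIV. (if x then u else v) * (if x then f else g) q \<sigma>) \<tau>
        = (\<Sum>x\<in>UNIV. (if x then u else v) * D_scalar n G k p (if x then f else g) \<tau>)"
    by (rule D_scalar_sum) (use assms in auto)
  thus ?thesis by (simp add: UNIV_bool add.commute)
qed

lemma D_scalar_cong:
  assumes p: "p \<in> midx n" and \<tau>: "\<tau> \<in> uhp"
    and eq: "\<And>j \<sigma>. j \<in> midx n \<Longrightarrow> \<sigma> \<in> uhp \<Longrightarrow> hs j \<sigma> = hs' j \<sigma>"
  shows "D_scalar n G k p hs \<tau> = D_scalar n G k p hs' \<tau>"
proof -
  have "(deriv ^^ m) (shifted_coeff hs p q) \<tau> = (deriv ^^ m) (shifted_coeff hs' p q) \<tau>" for m q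
  proof (rule higher_deriv_cong_ev[OF _ refl])
    show "\<forall>\<^sub>F x in nhds \<tau>. shifted_coeff hs p q x = shifted_coeff hs' p q x"
      using eventually_nhds_in_open[OF open_uhp \<tau>]
      by eventually_elim (use eq midx_diff[OF p] in \<open>auto simp: shifted_coeff_def\<close>)
  qed
  thus ?thesis unfolding D_scalar_def by simp
qed

section \<open>Triangularity of \<open>D\<^sub>k\<close> and its inverse\<close>

definition D_scalar_lower :: "nat \<Rightarrow> (nat \<Rightarrow> nat \<Rightarrow> real) \<Rightarrow> real \<Rightarrow> (nat \<Rightarrow> nat) \<Rightarrow>
    ((nat \<Rightarrow> nat) \<Rightarrow> complex \<Rightarrow> complex) \<Rightarrow> complex \<Rightarrow> complex" where
  "D_scalar_lower n G k p hs \<tau> =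
     (\<Sum>\<Lambda>\<in>mats n (sidx n p div 2) - {\<lambda>i j. 0}.
        mat_weight n (gram_coeff G) \<Lambda> * D_coeff k (sidx n p) (smat n \<Lambda>) *
        (deriv ^^ smat n \<Lambda>) (shifted_coeff hs p (piL n \<Lambda>)) \<tau>)"

lemma D_scalar_eq_lead_plus_lower:
  "D_scalar n G k p hs \<tau> = D_norm n p * (D_coeff k (sidx n p) 0 * hs p \<tau> + D_scalar_lower n G k p hs \<tau>)"
proof -
  have "piL n (\<lambda>i j. 0) = (\<lambda>i. 0)" by (simp add: piL_def fun_eq_iff)
  hence "shifted_coeff hs p (piL n (\<lambda>i j. 0)) = hs p" by (simp add: shifted_coeff_def)
  thus ?thesis unfolding D_scalar_def D_scalar_lower_def
    by (subst sum.remove[OF finite_mats zero_in_mats]) (simp add: smat_def mat_weight_zero)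
qed

lemma D_scalar_lower_cong:
  assumes p: "p \<in> midx n" and \<tau>: "\<tau> \<in> uhp"
    and eq: "\<And>j \<sigma>. j \<in> midx n \<Longrightarrow> sidx n j < sidx n p \<Longrightarrow> \<sigma> \<in> uhp \<Longrightarrow> hs j \<sigma> = hs' j \<sigma>"
  shows "D_scalar_lower n G k p hs \<tau> = D_scalar_lower n G k p hs' \<tau>"
  unfolding D_scalar_lower_def
proof (rule sum.cong[OF refl])
  fix \<Lambda> assume \<Lambda>: "\<Lambda> \<in> mats n (sidx n p div 2) - {\<lambda>i j. 0}"
  have "(deriv ^^ smat n \<Lambda>) (shifted_coeff hs p (piL n \<Lambda>)) \<tau>
          = (deriv ^^ smat n \<Lambda>) (shifted_coeff hs' p (piL n \<Lambda>)) \<tau>"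
  proof (cases "\<forall>i. piL n \<Lambda> i \<le> p i")
    case True
    have less: "sidx n (\<lambda>i. p i - piL n \<Lambda> i) < sidx n p"
      by (rule sidx_diff_piL_less[OF True]) (use \<Lambda> mats_supported in auto)
    show ?thesis unfolding shifted_coeff_le[OF True]
    proof (rule higher_deriv_cong_ev[OF _ refl])
      show "\<forall>\<^sub>F x in nhds \<tau>. hs (\<lambda>i. p i - piL n \<Lambda> i) x = hs' (\<lambda>i. p i - piL n \<Lambda> i) x"
        using eventually_nhds_in_open[OF open_uhp \<tau>]
        by eventually_elim (use eq midx_diff[OF p] less in auto)
    qed
  next
    case False thus ?thesis by (simp add: shifted_coeff_not_le[OF False])
  qed
  thus "mat_weight n (gram_coeff G) \<Lambda> * D_coeff k (sidx n p) (smat n \<Lambda>) *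
          (deriv ^^ smat n \<Lambda>) (shifted_coeff hs p (piL n \<Lambda>)) \<tau> =
        mat_weight n (gram_coeff G) \<Lambda> * D_coeff k (sidx n p) (smat n \<Lambda>) *
          (deriv ^^ smat n \<Lambda>) (shifted_coeff hs' p (piL n \<Lambda>)) \<tau>" by simp
qed

lemma D_scalar_lower_zero: "D_scalar_lower n G k p (\<lambda>j \<sigma>. 0) \<tau> = 0"
proof -
  have "shifted_coeff (\<lambda>j \<sigma>. 0) p q = (\<lambda>_. 0)" for q by (simp add: shifted_coeff_def)
  thus ?thesis unfolding D_scalar_lower_def by (simp add: higher_deriv_const)
qed

lemma D_scalar_vanishing_imp_zero:
  assumes knz: "\<forall>N::nat. k \<noteq> - real N"
    and D0: "\<And>p \<tau>. p \<in> midx n \<Longrightarrow> \<tau> \<in> uhp \<Longrightarrow> D_scalar n G k p hs \<tau> = 0"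
  shows "p \<in> midx n \<Longrightarrow> \<tau> \<in> uhp \<Longrightarrow> hs p \<tau> = 0"
proof (induction "sidx n p" arbitrary: p \<tau> rule: less_induct)
  case less
  have "D_scalar_lower n G k p hs \<tau> = D_scalar_lower n G k p (\<lambda>j \<sigma>. 0) \<tau>"
    by (rule D_scalar_lower_cong[OF less.prems]) (use less.hyps in auto)
  hence "0 = D_norm n p * (D_coeff k (sidx n p) 0 * hs p \<tau>)"
    using D0[OF less.prems] D_scalar_eq_lead_plus_lower[of n G k p hs \<tau>] by (simp add: D_scalar_lower_zero)
  thus ?case using D_norm_nonzero[of n p] D_coeff_0_nonzero[OF knz] by simp
qed

text \<open>The preimage of \<open>gs\<close> is built by recursion on the weight \<open>s(p)\<close>: stage \<open>N + 1\<close> solves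
  \<open>D\<^sub>k\<^sub>,\<^sub>p h = gs p\<close> for \<open>h\<^sub>p\<close> on all \<open>p\<close> of weight \<open>N\<close>, which only needs the values of the
  earlier stages.\<close>

primrec preimage_stage :: "nat \<Rightarrow> (nat \<Rightarrow> nat \<Rightarrow> real) \<Rightarrow> real \<Rightarrow> ((nat \<Rightarrow> nat) \<Rightarrow> complex \<Rightarrow> complex)
    \<Rightarrow> nat \<Rightarrow> (nat \<Rightarrow> nat) \<Rightarrow> complex \<Rightarrow> complex" where
  "preimage_stage n G k gs 0 = (\<lambda>p \<tau>. 0)"
| "preimage_stage n G k gs (Suc N) = (\<lambda>p \<tau>. if p \<in> midx n \<and> sidx n p = N \<and> \<tau> \<in> uhp
       then (gs p \<tau> / D_norm n p - D_scalar_lower n G k p (preimage_stage n G k gs N) \<tau>)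
            / D_coeff k (sidx n p) 0
       else preimage_stage n G k gs N p \<tau>)"

definition D_scalar_preimage :: "nat \<Rightarrow> (nat \<Rightarrow> nat \<Rightarrow> real) \<Rightarrow> real \<Rightarrow> ((nat \<Rightarrow> nat) \<Rightarrow> complex \<Rightarrow> complex)
    \<Rightarrow> (nat \<Rightarrow> nat) \<Rightarrow> complex \<Rightarrow> complex" where
  "D_scalar_preimage n G k gs = (\<lambda>p. preimage_stage n G k gs (Suc (sidx n p)) p)"

lemma preimage_stage_stable:
  "sidx n j < N \<Longrightarrow> N \<le> M \<Longrightarrow> preimage_stage n G k gs M j = preimage_stage n G k gs N j"
proof (induction M)
  case 0 thus ?case by simp
next
  case (Suc M)
  show ?case
  proof (cases "N = Suc M")
    case False
    hence "N \<le> M" "sidx n j \<noteq> M" using Suc.prems by auto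
    thus ?thesis using Suc.IH Suc.prems by (simp add: fun_eq_iff)
  qed simp
qed

lemma preimage_stage_eq_D_scalar_preimage:
  "sidx n j < N \<Longrightarrow> preimage_stage n G k gs N j = D_scalar_preimage n G k gs j"
  unfolding D_scalar_preimage_def by (rule preimage_stage_stable) auto

lemma preimage_stage_outside: "j \<notin> midx n \<or> \<tau> \<notin> uhp \<Longrightarrow> preimage_stage n G k gs N j \<tau> = 0"
  by (induction N) auto

lemma D_scalar_preimage_outside:
  "j \<notin> midx n \<or> \<tau> \<notin> uhp \<Longrightarrow> D_scalar_preimage n G k gs j \<tau> = 0"
  unfolding D_scalar_preimage_def by (rule preimage_stage_outside)

lemma D_scalar_preimage_eq:
  assumes p: "p \<in> midx n" and \<tau>: "\<tau> \<in> uhp"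
  shows "D_scalar_preimage n G k gs p \<tau>
           = (gs p \<tau> / D_norm n p - D_scalar_lower n G k p (D_scalar_preimage n G k gs) \<tau>)
             / D_coeff k (sidx n p) 0"
proof -
  have "D_scalar_lower n G k p (preimage_stage n G k gs (sidx n p)) \<tau>
          = D_scalar_lower n G k p (D_scalar_preimage n G k gs) \<tau>"
    by (rule D_scalar_lower_cong[OF p \<tau>]) (simp add: preimage_stage_eq_D_scalar_preimage)
  thus ?thesis using p \<tau> by (simp add: D_scalar_preimage_def)
qed

lemma D_scalar_D_scalar_preimage:
  assumes knz: "\<forall>N::nat. k \<noteq> - real N" and p: "p \<in> midx n" and \<tau>: "\<tau> \<in> uhp"
  shows "D_scalar n G k p (D_scalar_preimage n G k gs) \<tau> = gs p \<tau>"
  unfolding D_scalar_eq_lead_plus_lower D_scalar_preimage_eq[OF p \<tau>]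
  using D_norm_nonzero[of n p] D_coeff_0_nonzero[OF knz, of "sidx n p"]
  by (simp add: field_simps)

lemma holomorphic_on_D_scalar_preimage:
  assumes gs: "\<And>p. p \<in> midx n \<Longrightarrow> gs p holomorphic_on uhp"
  shows "D_scalar_preimage n G k gs j holomorphic_on uhp"
proof (induction "sidx n j" arbitrary: j rule: less_induct)
  case less
  show ?case
  proof (cases "j \<in> midx n")
    case False
    hence "D_scalar_preimage n G k gs j = (\<lambda>_. 0)" by (simp add: D_scalar_preimage_outside fun_eq_iff)
    thus ?thesis by simp
  next
    case True
    have "shifted_coeff (preimage_stage n G k gs (sidx n j)) j (piL n \<Lambda>) holomorphic_on uhp"
      if \<Lambda>: "\<Lambda> \<in> mats n (sidx n j div 2) - {\<lambda>i j. 0}" for \<Lambda>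
    proof (cases "\<forall>i. piL n \<Lambda> i \<le> j i")
      case le: True
      have less: "sidx n (\<lambda>i. j i - piL n \<Lambda> i) < sidx n j"
        by (rule sidx_diff_piL_less[OF le]) (use \<Lambda> mats_supported in auto)
      show ?thesis unfolding shifted_coeff_le[OF le] preimage_stage_eq_D_scalar_preimage[OF less]
        by (rule less.hyps[OF less])
    next
      case False thus ?thesis by (simp add: shifted_coeff_not_le[OF False])
    qed
    hence "D_scalar_lower n G k j (preimage_stage n G k gs (sidx n j)) holomorphic_on uhp"
      unfolding D_scalar_lower_def[abs_def] by (intro holomorphic_intros holomorphic_higher_deriv open_uhp)
    hence "(\<lambda>\<tau>. (gs j \<tau> / D_norm n j - D_scalar_lower n G k j (preimage_stage n G k gs (sidx n j)) \<tau>)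
                / D_coeff k (sidx n j) 0) holomorphic_on uhp"
      using gs[OF True] D_norm_nonzero[of n j] by (intro holomorphic_intros) auto
    thus ?thesis
      by (rule holomorphic_transform) (use True in \<open>simp add: D_scalar_preimage_def\<close>)
  qed
qed

section \<open>Equivariance of \<open>D\<^sub>k\<^sub>,\<^sub>p\<close>\<close>

lemma sum_triangle_swap:
  fixes g :: "nat \<Rightarrow> nat \<Rightarrow> complex"
  shows "(\<Sum>t\<le>S. \<Sum>j\<le>t. g t j) = (\<Sum>j\<le>S. \<Sum>t\<in>{j..S}. g t j)"
proof (induction S)
  case (Suc S)
  have "(\<Sum>j\<le>S. \<Sum>t\<in>{j..Suc S}. g t j) = (\<Sum>j\<le>S. (\<Sum>t\<in>{j..S}. g t j) + g (Suc S) j)"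
    by (rule sum.cong[OF refl]) (simp add: sum.cl_ivl_Suc)
  thus ?case using Suc by (simp add: sum.distrib)
qed simp

lemma slash_collapse_summand:
  assumes tj: "j \<le> t" "t \<le> S" and S: "S \<le> sp div 2"
  shows "of_nat (S choose t) * (D_coeff k sp t * of_int c ^ (S - t) *
            (slash_deriv_coeff (of_real k + of_nat (sp - 2 * t) - of_nat (S - t)) c t j *
               Z powr (- (of_real k + of_nat (sp - 2 * t) - of_nat (S - t)) - of_nat t - of_nat j) * Dh))
       = of_nat (S choose t) * of_nat (t choose j) * (-1)^(t-j) * D_coeff k sp t *
            pochhammer (of_real k + of_nat sp - of_nat S - of_nat (t - j) :: complex) (t - j)
         * (of_int c ^ (S - j) * Z powr (- (of_real k + of_nat sp) + of_nat (S - j)) * Dh)"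
proof -
  have sp2: "2 * t \<le> sp" using tj S by linarith
  have ex: "- (of_real k + of_nat (sp - 2 * t) - of_nat (S - t)) - of_nat t - of_nat j
      = (- (of_real k + of_nat sp) + of_nat (S - j) :: complex)"
    using sp2 tj by (simp add: of_nat_diff algebra_simps)
  have pa: "of_real k + of_nat (sp - 2 * t) - of_nat (S - t) + of_nat j
      = (of_real k + of_nat sp - of_nat S - of_nat (t - j) :: complex)"
    using sp2 tj by (simp add: of_nat_diff algebra_simps)
  have e: "S - j = (S - t) + (t - j)" using tj by simp
  have c: "(of_int c :: complex) ^ (S - j) = of_int c ^ (S - t) * of_int c ^ (t - j)"
    unfolding e power_add ..
  show ?thesis unfolding slash_deriv_coeff_def ex pa power_minus[of "of_int c"] c
    by (simp only: mult_ac)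
qed

text \<open>After exchanging the two sums, the coefficient of each \<open>Dh j\<close> is an alternating binomial sum
  of Pochhammer symbols, which vanishes unless \<open>j = S\<close>.\<close>

lemma sum_binomial_slash_terms_collapse:
  fixes Z :: complex and Dh :: "nat \<Rightarrow> complex"
  assumes knz: "\<forall>N::nat. k \<noteq> - real N" and S: "S \<le> sp div 2"
  shows "(\<Sum>t\<le>S. of_nat (S choose t) * (D_coeff k sp t * of_int c ^ (S - t) *
            (\<Sum>j\<le>t. slash_deriv_coeff (of_real k + of_nat (sp - 2 * t) - of_nat (S - t)) c t j *
               Z powr (- (of_real k + of_nat (sp - 2 * t) - of_nat (S - t)) - of_nat t - of_nat j) * Dh j)))
     = D_coeff k sp S * Z powr (- (of_real k + of_nat sp)) * Dh S"
proof -
  define Y where "Y = (\<lambda>j. of_int c ^ (S - j) * Z powr (- (of_real k + of_nat sp) + of_nat (S - j)) * Dh j)"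
  define B where "B = (\<lambda>t j. of_nat (S choose t) * of_nat (t choose j) * (-1)^(t-j) * D_coeff k sp t *
            pochhammer (of_real k + of_nat sp - of_nat S - of_nat (t - j) :: complex) (t - j))"
  have "(\<Sum>t\<le>S. of_nat (S choose t) * (D_coeff k sp t * of_int c ^ (S - t) *
            (\<Sum>j\<le>t. slash_deriv_coeff (of_real k + of_nat (sp - 2 * t) - of_nat (S - t)) c t j *
               Z powr (- (of_real k + of_nat (sp - 2 * t) - of_nat (S - t)) - of_nat t - of_nat j) * Dh j)))
      = (\<Sum>t\<le>S. \<Sum>j\<le>t. B t j * Y j)"
    unfolding sum_distrib_left B_def Y_def
    by (intro sum.cong refl slash_collapse_summand[OF _ _ S]) auto
  also have "\<dots> = (\<Sum>j\<le>S. (\<Sum>t\<in>{j..S}. B t j) * Y j)"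
    by (simp add: sum_triangle_swap sum_distrib_right)
  also have "\<dots> = (\<Sum>j\<le>S. (if j = S then D_coeff k sp S else 0) * Y j)"
    unfolding B_def by (intro sum.cong refl arg_cong2[where f=times] sum_D_coeff_pochhammer[OF knz _ S]) auto
  also have "\<dots> = D_coeff k sp S * Y S"
    by (simp add: if_distrib[of "\<lambda>x. x * _"] cong: if_cong)
  finally show ?thesis by (simp add: Y_def)
qed

lemma sum_submats_slash_terms:
  fixes Z :: complex and Dh :: "nat \<Rightarrow> complex"
  assumes knz: "\<forall>N::nat. k \<noteq> - real N" and N: "mat_supported n N" and SN: "smat n N \<le> sp div 2"
  shows "(\<Sum>\<Lambda>\<in>submats N. mat_weight n x \<Lambda> * D_coeff k sp (smat n \<Lambda>) *
            (mat_weight n x (\<lambda>i j. N i j - \<Lambda> i j) * of_int c ^ smat n (\<lambda>i j. N i j - \<Lambda> i j) *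
             (\<Sum>j\<le>smat n \<Lambda>.
                slash_deriv_coeff (of_real k + of_nat (sp - 2 * smat n \<Lambda>) - of_nat (smat n (\<lambda>i j. N i j - \<Lambda> i j)))
                  c (smat n \<Lambda>) j *
                Z powr (- (of_real k + of_nat (sp - 2 * smat n \<Lambda>) - of_nat (smat n (\<lambda>i j. N i j - \<Lambda> i j)))
                        - of_nat (smat n \<Lambda>) - of_nat j) * Dh j)))
       = mat_weight n x N * (D_coeff k sp (smat n N) * Z powr (- (of_real k + of_nat sp)) * Dh (smat n N))"
proof -
  define \<psi> where "\<psi> = (\<lambda>t. D_coeff k sp t * of_int c ^ (smat n N - t) *
            (\<Sum>j\<le>t. slash_deriv_coeff (of_real k + of_nat (sp - 2 * t) - of_nat (smat n N - t)) c t j *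
               Z powr (- (of_real k + of_nat (sp - 2 * t) - of_nat (smat n N - t)) - of_nat t - of_nat j) * Dh j))"
  have "(\<Sum>\<Lambda>\<in>submats N. mat_weight n x \<Lambda> * D_coeff k sp (smat n \<Lambda>) *
            (mat_weight n x (\<lambda>i j. N i j - \<Lambda> i j) * of_int c ^ smat n (\<lambda>i j. N i j - \<Lambda> i j) *
             (\<Sum>j\<le>smat n \<Lambda>.
                slash_deriv_coeff (of_real k + of_nat (sp - 2 * smat n \<Lambda>) - of_nat (smat n (\<lambda>i j. N i j - \<Lambda> i j)))
                  c (smat n \<Lambda>) j *
                Z powr (- (of_real k + of_nat (sp - 2 * smat n \<Lambda>) - of_nat (smat n (\<lambda>i j. N i j - \<Lambda> i j)))
                        - of_nat (smat n \<Lambda>) - of_nat j) * Dh j)))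
      = (\<Sum>\<Lambda>\<in>submats N. mat_weight n x \<Lambda> * mat_weight n x (\<lambda>i j. N i j - \<Lambda> i j) * \<psi> (smat n \<Lambda>))"
    by (intro sum.cong refl) (simp add: \<psi>_def smat_diff mult_ac)
  also have "\<dots> = mat_weight n x N * (\<Sum>t\<le>smat n N. of_nat (smat n N choose t) * \<psi> t)"
    by (rule sum_submats_convolution[OF N])
  also have "(\<Sum>t\<le>smat n N. of_nat (smat n N choose t) * \<psi> t)
               = D_coeff k sp (smat n N) * Z powr (- (of_real k + of_nat sp)) * Dh (smat n N)"
    unfolding \<psi>_def by (rule sum_binomial_slash_terms_collapse[OF knz SN])
  finally show ?thesis .
qed

text \<open>An index matrix \<open>N\<close> is admissible for \<open>p\<close> when \<open>h\<^sub>p\<^sub>-\<^sub>\<pi>\<^sub>(\<^sub>N\<^sub>)\<close> is not forced to vanish by the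
  convention for negative indices; only such \<open>N\<close> contribute to \<open>D\<^sub>k\<^sub>,\<^sub>p\<close>.\<close>

definition admissible_mats :: "nat \<Rightarrow> (nat \<Rightarrow> nat) \<Rightarrow> (nat \<Rightarrow> nat \<Rightarrow> nat) set" where
  "admissible_mats n p = {N\<in>mats n (sidx n p div 2). \<forall>i. piL n N i \<le> p i}"

definition admissible_pairs :: "nat \<Rightarrow> (nat \<Rightarrow> nat) \<Rightarrow> ((nat \<Rightarrow> nat \<Rightarrow> nat) \<times> (nat \<Rightarrow> nat \<Rightarrow> nat)) set" where
  "admissible_pairs n p = {(\<Lambda>, M). \<Lambda> \<in> mats n (sidx n p div 2) \<and> M \<in> mats n (sidx n p - 2 * smat n \<Lambda>)
                                   \<and> (\<forall>i. piL n \<Lambda> i + piL n M i \<le> p i)}"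

lemma finite_admissible_mats: "finite (admissible_mats n p)"
  unfolding admissible_mats_def by (rule finite_subset[OF _ finite_mats]) auto

lemma bij_betw_split_submats:
  "bij_betw (\<lambda>(N, \<Lambda>). (\<Lambda>, \<lambda>i j. N i j - \<Lambda> i j)) (Sigma (admissible_mats n p) submats) (admissible_pairs n p)"
proof (rule bij_betw_byWitness[where f'="\<lambda>(\<Lambda>, M). (\<lambda>i j. \<Lambda> i j + M i j, \<Lambda>)"])
  show "\<forall>x\<in>Sigma (admissible_mats n p) submats.
          (\<lambda>(\<Lambda>, M). (\<lambda>i j. \<Lambda> i j + M i j, \<Lambda>)) ((\<lambda>(N, \<Lambda>). (\<Lambda>, \<lambda>i j. N i j - \<Lambda> i j)) x) = x"
    by (auto simp: submats_def fun_eq_iff)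
  show "\<forall>y\<in>admissible_pairs n p.
          (\<lambda>(N, \<Lambda>). (\<Lambda>, \<lambda>i j. N i j - \<Lambda> i j)) ((\<lambda>(\<Lambda>, M). (\<lambda>i j. \<Lambda> i j + M i j, \<Lambda>)) y) = y"
    by auto
  show "(\<lambda>(N, \<Lambda>). (\<Lambda>, \<lambda>i j. N i j - \<Lambda> i j)) ` Sigma (admissible_mats n p) submats \<subseteq> admissible_pairs n p"
  proof clarify
    fix N \<Lambda> assume N: "N \<in> admissible_mats n p" and \<Lambda>: "\<Lambda> \<in> submats N"
    have supp: "mat_supported n N" using N mats_supported by (auto simp: admissible_mats_def)
    have "smat n \<Lambda> \<le> smat n N" "smat n N \<le> sidx n p div 2"
      using smat_mono[OF \<Lambda>] N by (auto simp: admissible_mats_def mats_def)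
    moreover have "mat_supported n \<Lambda>" "mat_supported n (\<lambda>i j. N i j - \<Lambda> i j)"
      using submats_supported[OF supp \<Lambda>] supp by (auto simp: mat_supported_def)
    ultimately show "(\<Lambda>, \<lambda>i j. N i j - \<Lambda> i j) \<in> admissible_pairs n p"
      using N piL_add_diff[OF \<Lambda>, of n] smat_diff[OF \<Lambda>, of n]
      by (auto simp: admissible_pairs_def admissible_mats_def mats_def mat_supported_def fun_eq_iff)
  qed
  show "(\<lambda>(\<Lambda>, M). (\<lambda>i j. \<Lambda> i j + M i j, \<Lambda>)) ` admissible_pairs n p \<subseteq> Sigma (admissible_mats n p) submats"
  proof clarify
    fix \<Lambda> M assume "(\<Lambda>, M) \<in> admissible_pairs n p"
    hence \<Lambda>: "\<Lambda> \<in> mats n (sidx n p div 2)" and M: "M \<in> mats n (sidx n p - 2 * smat n \<Lambda>)"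
      and le: "\<forall>i. piL n (\<lambda>i j. \<Lambda> i j + M i j) i \<le> p i"
      by (auto simp: admissible_pairs_def piL_add)
    have "mat_supported n (\<lambda>i j. \<Lambda> i j + M i j)"
      using mats_supported[OF \<Lambda>] mats_supported[OF M] by (simp add: mat_supported_def)
    thus "(\<lambda>i j. \<Lambda> i j + M i j) \<in> admissible_mats n p \<and> \<Lambda> \<in> submats (\<lambda>i j. \<Lambda> i j + M i j)"
      using le smat_le_half_sidx[OF le]
      by (auto simp: admissible_mats_def mats_def mat_supported_def submats_def)
  qed
qed

lemma sum_mats_pairs_regroup:
  fixes \<Phi> :: "(nat \<Rightarrow> nat \<Rightarrow> nat) \<Rightarrow> (nat \<Rightarrow> nat \<Rightarrow> nat) \<Rightarrow> complex"
  assumes vanish: "\<And>\<Lambda> M. \<not> (\<forall>i. piL n \<Lambda> i + piL n M i \<le> p i) \<Longrightarrow> \<Phi> \<Lambda> M = 0"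
  shows "(\<Sum>\<Lambda>\<in>mats n (sidx n p div 2). \<Sum>M\<in>mats n (sidx n p - 2 * smat n \<Lambda>). \<Phi> \<Lambda> M)
       = (\<Sum>N\<in>admissible_mats n p. \<Sum>\<Lambda>\<in>submats N. \<Phi> \<Lambda> (\<lambda>i j. N i j - \<Lambda> i j))"
proof -
  define Pairs where "Pairs = Sigma (mats n (sidx n p div 2)) (\<lambda>\<Lambda>. mats n (sidx n p - 2 * smat n \<Lambda>))"
  have "(\<Sum>\<Lambda>\<in>mats n (sidx n p div 2). \<Sum>M\<in>mats n (sidx n p - 2 * smat n \<Lambda>). \<Phi> \<Lambda> M)
          = (\<Sum>(\<Lambda>, M)\<in>Pairs. \<Phi> \<Lambda> M)"
    unfolding Pairs_def by (rule sum.Sigma) (auto intro: finite_mats)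
  also have "\<dots> = (\<Sum>(\<Lambda>, M)\<in>admissible_pairs n p. \<Phi> \<Lambda> M)"
    by (rule sum.mono_neutral_right)
       (auto simp: Pairs_def admissible_pairs_def intro: finite_mats, meson vanish)
  also have "\<dots> = (\<Sum>(N, \<Lambda>)\<in>Sigma (admissible_mats n p) submats. \<Phi> \<Lambda> (\<lambda>i j. N i j - \<Lambda> i j))"
    by (subst sum.reindex_bij_betw[OF bij_betw_split_submats, symmetric]) (auto simp: case_prod_unfold)
  also have "\<dots> = (\<Sum>N\<in>admissible_mats n p. \<Sum>\<Lambda>\<in>submats N. \<Phi> \<Lambda> (\<lambda>i j. N i j - \<Lambda> i j))"
    by (rule sum.Sigma[symmetric, OF finite_admissible_mats])
       (auto simp: admissible_mats_def intro: finite_submats mats_supported)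
  finally show ?thesis .
qed

lemma powL_scaled_gram:
  "powL n (\<lambda>i j. - of_real pi * \<i> * of_int c * of_real (G i j)) M / factL n M
     = mat_weight n (gram_coeff G) M * of_int c ^ smat n M"
proof -
  have e: "(- of_real pi * \<i> * of_int c * of_real (G i j) :: complex) = of_int c * gram_coeff G i j" for i j
    by (simp add: gram_coeff_def)
  have "powL n (\<lambda>i j. - of_real pi * \<i> * of_int c * of_real (G i j)) M
          = (\<Prod>i<n. \<Prod>j<n. of_int c ^ M i j * gram_coeff G i j ^ M i j)"
    unfolding powL_def e power_mult_distrib ..
  also have "\<dots> = (\<Prod>i<n. \<Prod>j<n. of_int c ^ M i j) * powL n (gram_coeff G) M"
    unfolding powL_def by (simp add: prod.distrib)
  also have "(\<Prod>i<n. \<Prod>j<n. (of_int c :: complex) ^ M i j) = of_int c ^ smat n M"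
    unfolding smat_def by (simp add: power_sum)
  finally show ?thesis by (simp add: mat_weight_def)
qed

lemma higher_deriv_sum_slash_terms:
  fixes F :: "(nat \<Rightarrow> nat \<Rightarrow> nat) \<Rightarrow> complex \<Rightarrow> complex"
  assumes det: "a * d - b * c = 1" and A: "finite A" and F: "\<And>M. F M holomorphic_on uhp"
    and \<tau>: "\<tau> \<in> uhp"
  shows "(deriv ^^ r) (\<lambda>\<sigma>. E * (\<Sum>M\<in>A. C M * ((of_int c * \<sigma> + of_int d) powr (- \<beta> M)
                                                  * F M (mob (a, b, c, d) \<sigma>)))) \<tau>
     = E * (\<Sum>M\<in>A. C M * (\<Sum>j\<le>r. slash_deriv_coeff (\<beta> M) c r j
            * (of_int c * \<tau> + of_int d) powr (- \<beta> M - of_nat r - of_nat j)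
            * (deriv ^^ j) (F M) (mob (a, b, c, d) \<tau>)))"
proof -
  have hol: "(\<lambda>\<sigma>. (of_int c * \<sigma> + of_int d) powr (- \<beta> M) * F M (mob (a, b, c, d) \<sigma>)) holomorphic_on uhp"
    for M by (rule holomorphic_on_slash_term[OF det F])
  have "(deriv ^^ r) (\<lambda>\<sigma>. E * (\<Sum>M\<in>A. C M * ((of_int c * \<sigma> + of_int d) powr (- \<beta> M)
                                                  * F M (mob (a, b, c, d) \<sigma>)))) \<tau>
      = E * (deriv ^^ r) (\<lambda>\<sigma>. \<Sum>M\<in>A. C M * ((of_int c * \<sigma> + of_int d) powr (- \<beta> M)
                                                  * F M (mob (a, b, c, d) \<sigma>))) \<tau>"
    by (rule higher_deriv_cmult[OF _ \<tau> open_uhp])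
       (intro holomorphic_on_sum holomorphic_on_mult[OF holomorphic_on_const hol])
  also have "\<dots> = E * (\<Sum>M\<in>A. (deriv ^^ r) (\<lambda>\<sigma>. C M * ((of_int c * \<sigma> + of_int d) powr (- \<beta> M)
                                                  * F M (mob (a, b, c, d) \<sigma>))) \<tau>)"
    by (subst higher_deriv_sum[OF A _ open_uhp \<tau>])
       (auto simp del: mob.simps intro!: holomorphic_on_mult[OF holomorphic_on_const hol])
  also have "\<dots> = E * (\<Sum>M\<in>A. C M * (\<Sum>j\<le>r. slash_deriv_coeff (\<beta> M) c r j
            * (of_int c * \<tau> + of_int d) powr (- \<beta> M - of_nat r - of_nat j)
            * (deriv ^^ j) (F M) (mob (a, b, c, d) \<tau>)))"
    by (simp only: higher_deriv_cmult[OF hol \<tau> open_uhp] higher_deriv_slash[OF det F \<tau>])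
  finally show ?thesis .
qed

lemma higher_deriv_shifted_slash_scalar:
  assumes det: "a * d - b * c = 1" and hol: "\<And>j. hs j holomorphic_on uhp" and \<tau>: "\<tau> \<in> uhp"
  shows "(deriv ^^ smat n \<Lambda>) (shifted_coeff (slash_scalar n G k hs ((a, b, c, d), e)) p (piL n \<Lambda>)) \<tau>
    = of_int e powr complex_of_real (- 2 * k) *
      (\<Sum>M\<in>mats n (sidx n p - 2 * smat n \<Lambda>). mat_weight n (gram_coeff G) M * of_int c ^ smat n M *
        (\<Sum>j\<le>smat n \<Lambda>. slash_deriv_coeff (of_real k + of_nat (sidx n p - 2 * smat n \<Lambda>) - of_nat (smat n M))
                            c (smat n \<Lambda>) j *
            (of_int c * \<tau> + of_int d) powr (- (of_real k + of_nat (sidx n p - 2 * smat n \<Lambda>) - of_nat (smat n M))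
                                             - of_nat (smat n \<Lambda>) - of_nat j) *
            (deriv ^^ j) (shifted_coeff hs p (\<lambda>i. piL n \<Lambda> i + piL n M i)) (mob (a, b, c, d) \<tau>)))"
proof (cases "\<forall>i. piL n \<Lambda> i \<le> p i")
  case False
  hence "\<not> (\<forall>i. piL n \<Lambda> i + piL n M i \<le> p i)" for M by (metis add_leD1)
  thus ?thesis by (simp add: shifted_coeff_not_le[OF False] shifted_coeff_not_le higher_deriv_const)
next
  case True
  define q where "q = (\<lambda>i. p i - piL n \<Lambda> i)"
  define E where "E = (of_int e powr complex_of_real (- 2 * k) :: complex)"
  define \<beta> where "\<beta> = (\<lambda>M. of_real k + of_nat (sidx n q) - of_nat (smat n M) :: complex)"
  define C where "C = (\<lambda>M. powL n (\<lambda>i j. - of_real pi * \<i> * of_int c * of_real (G i j)) M / factL n M)"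
  define F where "F = (\<lambda>M. shifted_coeff hs q (piL n M))"
  have sq: "sidx n q = sidx n p - 2 * smat n \<Lambda>"
    unfolding q_def by (simp add: sidx_diff[OF True] sidx_piL)
  have "shifted_coeff (slash_scalar n G k hs ((a, b, c, d), e)) p (piL n \<Lambda>) =
     (\<lambda>\<sigma>. E * (\<Sum>M\<in>mats n (sidx n q). C M * ((of_int c * \<sigma> + of_int d) powr (- \<beta> M)
                                             * F M (mob (a, b, c, d) \<sigma>))))"
    unfolding shifted_coeff_le[OF True] q_def[symmetric]
    by (simp add: slash_scalar_def fun_eq_iff E_def C_def \<beta>_def F_def mult.assoc del: mob.simps)
  hence "(deriv ^^ smat n \<Lambda>) (shifted_coeff (slash_scalar n G k hs ((a, b, c, d), e)) p (piL n \<Lambda>)) \<tau>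
      = E * (\<Sum>M\<in>mats n (sidx n q). C M * (\<Sum>j\<le>smat n \<Lambda>. slash_deriv_coeff (\<beta> M) c (smat n \<Lambda>) j
              * (of_int c * \<tau> + of_int d) powr (- \<beta> M - of_nat (smat n \<Lambda>) - of_nat j)
              * (deriv ^^ j) (F M) (mob (a, b, c, d) \<tau>)))"
    unfolding F_def
    by (simp only: higher_deriv_sum_slash_terms[OF det finite_mats holomorphic_on_shifted_coeff[OF hol] \<tau>])
  moreover have "C M = mat_weight n (gram_coeff G) M * of_int c ^ smat n M" for M
    unfolding C_def by (rule powL_scaled_gram)
  moreover have "F M = shifted_coeff hs p (\<lambda>i. piL n \<Lambda> i + piL n M i)" for M
    unfolding F_def q_def by (rule shifted_coeff_shifted_coeff[OF True])
  ultimately show ?thesis unfolding \<beta>_def sq E_def by (simp add: mult.assoc)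
qed

lemma D_scalar_slash_scalar_expand:
  assumes det: "a * d - b * c = 1" and hol: "\<And>j. hs j holomorphic_on uhp" and \<tau>: "\<tau> \<in> uhp"
    and knz: "\<forall>N::nat. k \<noteq> - real N"
  shows "D_scalar n G k p (slash_scalar n G k hs ((a, b, c, d), e)) \<tau>
    = D_norm n p * of_int e powr complex_of_real (- 2 * k) *
      (\<Sum>N\<in>admissible_mats n p. mat_weight n (gram_coeff G) N *
         (D_coeff k (sidx n p) (smat n N) * (of_int c * \<tau> + of_int d) powr (- (of_real k + of_nat (sidx n p)))
          * (deriv ^^ smat n N) (shifted_coeff hs p (piL n N)) (mob (a, b, c, d) \<tau>)))"
proof -
  define sp where "sp = sidx n p"
  define x where "x = gram_coeff G"
  define Z where "Z = of_int c * \<tau> + (of_int d :: complex)"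
  define Dh where "Dh = (\<lambda>j r. (deriv ^^ j) (shifted_coeff hs p r) (mob (a, b, c, d) \<tau>))"
  define \<Phi> where "\<Phi> = (\<lambda>\<Lambda> M. mat_weight n x \<Lambda> * D_coeff k sp (smat n \<Lambda>) *
        (mat_weight n x M * of_int c ^ smat n M *
         (\<Sum>j\<le>smat n \<Lambda>. slash_deriv_coeff (of_real k + of_nat (sp - 2 * smat n \<Lambda>) - of_nat (smat n M)) c (smat n \<Lambda>) j *
            Z powr (- (of_real k + of_nat (sp - 2 * smat n \<Lambda>) - of_nat (smat n M)) - of_nat (smat n \<Lambda>) - of_nat j) *
            Dh j (\<lambda>i. piL n \<Lambda> i + piL n M i))))"
  have "D_scalar n G k p (slash_scalar n G k hs ((a, b, c, d), e)) \<tau>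
      = D_norm n p * of_int e powr complex_of_real (- 2 * k) *
        (\<Sum>\<Lambda>\<in>mats n (sp div 2). \<Sum>M\<in>mats n (sp - 2 * smat n \<Lambda>). \<Phi> \<Lambda> M)"
    unfolding D_scalar_def higher_deriv_shifted_slash_scalar[OF det hol \<tau>]
    by (simp add: \<Phi>_def sp_def x_def Z_def Dh_def sum_distrib_left mult_ac)
  also have "(\<Sum>\<Lambda>\<in>mats n (sp div 2). \<Sum>M\<in>mats n (sp - 2 * smat n \<Lambda>). \<Phi> \<Lambda> M)
      = (\<Sum>N\<in>admissible_mats n p. \<Sum>\<Lambda>\<in>submats N. \<Phi> \<Lambda> (\<lambda>i j. N i j - \<Lambda> i j))"
    unfolding sp_def
    by (rule sum_mats_pairs_regroup) (simp add: \<Phi>_def Dh_def shifted_coeff_not_le higher_deriv_const)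
  also have "\<dots> = (\<Sum>N\<in>admissible_mats n p.
       mat_weight n x N * (D_coeff k sp (smat n N) * Z powr (- (of_real k + of_nat sp)) * Dh (smat n N) (piL n N)))"
  proof (rule sum.cong[OF refl])
    fix N assume N: "N \<in> admissible_mats n p"
    hence "mat_supported n N" "smat n N \<le> sp div 2"
      by (auto simp: admissible_mats_def sp_def smat_le_half_sidx intro: mats_supported)
    from sum_submats_slash_terms[OF knz this, of x c Z "\<lambda>j. Dh j (piL n N)"]
    show "(\<Sum>\<Lambda>\<in>submats N. \<Phi> \<Lambda> (\<lambda>i j. N i j - \<Lambda> i j))
        = mat_weight n x N * (D_coeff k sp (smat n N) * Z powr (- (of_real k + of_nat sp)) * Dh (smat n N) (piL n N))"
      by (simp add: \<Phi>_def piL_add_diff cong: sum.cong_simp)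
  qed
  finally show ?thesis by (simp add: sp_def x_def Z_def Dh_def)
qed

lemma D_scalar_eq_sum_admissible:
  "D_scalar n G k p hs w = D_norm n p *
     (\<Sum>N\<in>admissible_mats n p. mat_weight n (gram_coeff G) N *
        D_coeff k (sidx n p) (smat n N) * (deriv ^^ smat n N) (shifted_coeff hs p (piL n N)) w)"
  unfolding D_scalar_def admissible_mats_def
  by (intro arg_cong2[where f=times] refl sum.mono_neutral_right finite_mats)
     (auto simp: shifted_coeff_not_le higher_deriv_const)

theorem D_scalar_slash_scalar:
  assumes det: "a * d - b * c = 1" and e: "e = 1 \<or> e = -1" and k: "\<exists>m::int. k = of_int m / 2"
    and knz: "\<forall>N::nat. k \<noteq> - real N" and hol: "\<And>j. hs j holomorphic_on uhp" and \<tau>: "\<tau> \<in> uhp"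
  shows "D_scalar n G k p (slash_scalar n G k hs ((a, b, c, d), e)) \<tau> =
     (mp_phi ((a, b, c, d), e) \<tau>) powr (complex_of_real (- 2 * (k + real (sidx n p)))) *
     D_scalar n G k p hs (mob (a, b, c, d) \<tau>)"
proof -
  have "(mp_phi ((a, b, c, d), e) \<tau>) powr (complex_of_real (- 2 * (k + real (sidx n p))))
          = of_int e powr complex_of_real (- 2 * k)
            * (of_int c * \<tau> + of_int d) powr (- (of_real k + of_nat (sidx n p)))"
    using metaplectic_factor_powr[OF e mob_denom_nonzero[OF det \<tau>] k] by simp
  thus ?thesis
    unfolding D_scalar_slash_scalar_expand[OF det hol \<tau> knz] D_scalar_eq_sum_admissible[of n G k p hs]
    by (simp add: sum_distrib_left mult_ac)
qed

lemma metaplectic_lift_cases: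
  assumes "is_sl2z_subgroup H" and "ge \<in> mp_lift H"
  obtains a b c d e where "ge = ((a, b, c, d), e)" and "e = 1 \<or> e = -1" and "a * d - b * c = 1"
proof -
  obtain \<gamma> e where ge: "ge = (\<gamma>, e)" "\<gamma> \<in> H" "e = 1 \<or> e = -1"
    using assms(2) by (auto simp: mp_lift_def)
  obtain a b c d where \<gamma>: "\<gamma> = (a, b, c, d)" by (cases \<gamma>) auto
  have "mat2_det \<gamma> = 1" using assms(1) ge(2) by (simp add: is_sl2z_subgroup_def)
  thus ?thesis using that ge \<gamma> by simp
qed

lemma hol_vec_nth: "hol_vec f S \<Longrightarrow> (\<lambda>\<sigma>. f \<sigma> $ i) holomorphic_on S"
  by (simp add: hol_vec_def)

lemma Dmap_nth: "p \<in> midx n \<Longrightarrow> \<tau> \<in> uhp \<Longrightarrow> Dmap n G k h p \<tau> $ i = D_scalar n G k p (\<lambda>j \<sigma>. h j \<sigma> $ i) \<tau>"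
  by (simp add: Dmap_def Dop_nth)

lemma D_scalar_injective:
  assumes knz: "\<forall>N::nat. k \<noteq> - real N"
    and f: "\<And>j. f j holomorphic_on uhp" and f': "\<And>j. f' j holomorphic_on uhp"
    and eq: "\<And>q \<sigma>. q \<in> midx n \<Longrightarrow> \<sigma> \<in> uhp \<Longrightarrow> D_scalar n G k q f \<sigma> = D_scalar n G k q f' \<sigma>"
    and p: "p \<in> midx n" and \<tau>: "\<tau> \<in> uhp"
  shows "f p \<tau> = f' p \<tau>"
proof -
  have "D_scalar n G k q (\<lambda>j \<sigma>. 1 * f j \<sigma> + (-1) * f' j \<sigma>) \<sigma> = 0" if "q \<in> midx n" "\<sigma> \<in> uhp" for q \<sigma>
    using D_scalar_linear[where f=f and g=f' and u=1 and v="-1", OF f f' that(2)] eq[OF that] by simp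
  from D_scalar_vanishing_imp_zero[OF knz this p \<tau>] show ?thesis by simp
qed

lemma Dmap_linear:
  assumes h: "\<And>j. hol_vec (h j) uhp" and h': "\<And>j. hol_vec (h' j) uhp"
  shows "Dmap n G k (\<lambda>j \<tau>. a *s h j \<tau> + b *s h' j \<tau>) = (\<lambda>p \<tau>. a *s Dmap n G k h p \<tau> + b *s Dmap n G k h' p \<tau>)"
proof (intro ext)
  fix p \<tau>
  show "Dmap n G k (\<lambda>j \<tau>. a *s h j \<tau> + b *s h' j \<tau>) p \<tau> = a *s Dmap n G k h p \<tau> + b *s Dmap n G k h' p \<tau>"
  proof (cases "p \<in> midx n \<and> \<tau> \<in> uhp")
    case True
    thus ?thesis
      by (simp add: vec_eq_iff Dmap_nth D_scalar_linear[OF hol_vec_nth[OF h] hol_vec_nth[OF h']])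
  qed (auto simp: Dmap_def)
qed

lemma series_space_outside:
  assumes h: "h \<in> series_space n G k H \<rho>" and j\<tau>: "j \<notin> midx n \<or> \<tau> \<notin> uhp"
  shows "h j \<tau> = 0"
proof -
  have "\<forall>j \<tau>. \<tau> \<notin> uhp \<longrightarrow> h j \<tau> = 0" "\<forall>j. j \<notin> midx n \<longrightarrow> h j = (\<lambda>_. 0)"
    using h by (simp_all add: series_space_def)
  thus ?thesis using j\<tau> by auto
qed

lemma series_space_holomorphic_nth:
  "h \<in> series_space n G k H \<rho> \<Longrightarrow> (\<lambda>\<sigma>. h j \<sigma> $ i) holomorphic_on uhp"
  by (simp add: series_space_def hol_vec_def)

lemma Dmap_inj_on:
  assumes knz: "\<forall>N::nat. k \<noteq> - real N"
  shows "inj_on (Dmap n G k) (series_space n G k H \<rho>)"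
proof (rule inj_onI)
  fix h h' assume h: "h \<in> series_space n G k H \<rho>" and h': "h' \<in> series_space n G k H \<rho>"
    and eq: "Dmap n G k h = Dmap n G k h'"
  have "h j \<tau> $ i = h' j \<tau> $ i" for j \<tau> i
  proof (cases "j \<in> midx n \<and> \<tau> \<in> uhp")
    case True
    have "D_scalar n G k q (\<lambda>j \<sigma>. h j \<sigma> $ i) \<sigma> = D_scalar n G k q (\<lambda>j \<sigma>. h' j \<sigma> $ i) \<sigma>"
      if q: "q \<in> midx n" and \<sigma>: "\<sigma> \<in> uhp" for q \<sigma>
      using fun_cong[OF fun_cong[OF eq, of q], of \<sigma>] by (simp add: vec_eq_iff Dmap_nth[OF q \<sigma>])
    from D_scalar_injective[OF knz series_space_holomorphic_nth[OF h] series_space_holomorphic_nth[OF h'] this]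
    show ?thesis using True by blast
  next
    case False
    thus ?thesis using series_space_outside[OF h, of j \<tau>] series_space_outside[OF h', of j \<tau>] by simp
  qed
  thus "h = h'" by (simp add: fun_eq_iff vec_eq_iff)
qed

lemma Dmap_automorphy:
  assumes H: "is_sl2z_subgroup H" and k: "\<exists>m::int. k = of_int m / 2" and knz: "\<forall>N::nat. k \<noteq> - real N"
    and h: "h \<in> series_space n G k H \<rho>" and ge: "ge \<in> mp_lift H" and p: "p \<in> midx n" and \<tau>: "\<tau> \<in> uhp"
  shows "(mp_phi ge \<tau>) powr (complex_of_real (- 2 * (k + real (sidx n p)))) *s Dmap n G k h p (mob (fst ge) \<tau>)
           = \<rho> ge *v Dmap n G k h p \<tau>"
proof -
  obtain a b c d e where ge_eq: "ge = ((a, b, c, d), e)" and e: "e = 1 \<or> e = -1"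
    and det: "a * d - b * c = 1" by (rule metaplectic_lift_cases[OF H ge])
  have hol: "\<And>j i. (\<lambda>\<sigma>. h j \<sigma> $ i) holomorphic_on uhp" by (rule series_space_holomorphic_nth[OF h])
  have "transforms n G k H \<rho> h" using h by (simp add: series_space_def)
  hence tr: "slash_coeff n G k h ge q \<sigma> = \<rho> ge *v h q \<sigma>" if "q \<in> midx n" "\<sigma> \<in> uhp" for q \<sigma>
    using ge that by (simp add: transforms_def)
  have m: "mob (a, b, c, d) \<tau> \<in> uhp" by (rule mob_in_uhp[OF det \<tau>])
  define \<phi> where "\<phi> = (mp_phi ge \<tau>) powr (complex_of_real (- 2 * (k + real (sidx n p))))"
  have "\<phi> * Dmap n G k h p (mob (fst ge) \<tau>) $ i = (\<rho> ge *v Dmap n G k h p \<tau>) $ i" for i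
  proof -
    have "\<phi> * Dmap n G k h p (mob (fst ge) \<tau>) $ i
            = \<phi> * D_scalar n G k p (\<lambda>j \<sigma>. h j \<sigma> $ i) (mob (a, b, c, d) \<tau>)"
      by (simp only: ge_eq fst_conv Dmap_nth[OF p m])
    also have "\<dots> = D_scalar n G k p (slash_scalar n G k (\<lambda>j \<sigma>. h j \<sigma> $ i) ((a, b, c, d), e)) \<tau>"
      unfolding \<phi>_def ge_eq
      by (rule D_scalar_slash_scalar[where hs="\<lambda>j \<sigma>. h j \<sigma> $ i", OF det e k knz hol \<tau>, symmetric])
    also have "\<dots> = D_scalar n G k p (\<lambda>q \<sigma>. \<Sum>j\<in>UNIV. \<rho> ge $ i $ j * h q \<sigma> $ j) \<tau>"
    proof (rule D_scalar_cong[OF p \<tau>])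
      fix q \<sigma> assume "q \<in> midx n" "\<sigma> \<in> uhp"
      from tr[OF this] have "slash_coeff n G k h ge q \<sigma> $ i = (\<rho> ge *v h q \<sigma>) $ i" by (rule arg_cong)
      thus "slash_scalar n G k (\<lambda>j \<sigma>. h j \<sigma> $ i) ((a, b, c, d), e) q \<sigma>
              = (\<Sum>j\<in>UNIV. \<rho> ge $ i $ j * h q \<sigma> $ j)"
        by (simp only: slash_coeff_nth ge_eq matrix_vector_mult_def vec_lambda_beta)
    qed
    also have "\<dots> = (\<Sum>j\<in>UNIV. \<rho> ge $ i $ j * D_scalar n G k p (\<lambda>q \<sigma>. h q \<sigma> $ j) \<tau>)"
      by (rule D_scalar_sum[OF finite _ \<tau>]) (rule hol)
    also have "\<dots> = (\<rho> ge *v Dmap n G k h p \<tau>) $ i"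
      by (simp only: matrix_vector_mult_def vec_lambda_beta Dmap_nth[OF p \<tau>])
    finally show ?thesis .
  qed
  thus ?thesis unfolding \<phi>_def by (simp only: vec_eq_iff vector_smult_component) blast
qed

lemma Dmap_in_prod_space:
  assumes H: "is_sl2z_subgroup H" and k: "\<exists>m::int. k = of_int m / 2" and knz: "\<forall>N::nat. k \<noteq> - real N"
    and h: "h \<in> series_space n G k H \<rho>"
  shows "Dmap n G k h \<in> prod_space n k H \<rho>"
proof -
  have "Dmap n G k h p \<in> Hol (k + real (sidx n p)) H \<rho>" if p: "p \<in> midx n" for p
  proof -
    have "hol_vec (Dmap n G k h p) uhp"
      unfolding hol_vec_def
    proof
      fix i
      have "D_scalar n G k p (\<lambda>j \<sigma>. h j \<sigma> $ i) holomorphic_on uhp"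
        by (intro holomorphic_on_D_scalar series_space_holomorphic_nth[OF h])
      thus "(\<lambda>\<tau>. Dmap n G k h p \<tau> $ i) holomorphic_on uhp"
        by (rule holomorphic_transform) (simp add: Dmap_nth p)
    qed
    thus ?thesis
      using Dmap_automorphy[OF H k knz h _ p] by (auto simp: Hol_def Dmap_def)
  qed
  thus ?thesis by (auto simp: prod_space_def Dmap_def fun_eq_iff)
qed

definition Dmap_preimage :: "nat \<Rightarrow> (nat \<Rightarrow> nat \<Rightarrow> real) \<Rightarrow> real \<Rightarrow>
    ((nat \<Rightarrow> nat) \<Rightarrow> complex \<Rightarrow> complex^'m) \<Rightarrow> (nat \<Rightarrow> nat) \<Rightarrow> complex \<Rightarrow> complex^'m" where
  "Dmap_preimage n G k g = (\<lambda>j \<tau>. \<chi> i. D_scalar_preimage n G k (\<lambda>p \<tau>. g p \<tau> $ i) j \<tau>)"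

lemma prod_space_Hol: "g \<in> prod_space n k H \<rho> \<Longrightarrow> p \<in> midx n \<Longrightarrow> g p \<in> Hol (k + real (sidx n p)) H \<rho>"
  by (simp add: prod_space_def)

lemma holomorphic_on_Dmap_preimage_nth:
  assumes g: "g \<in> prod_space n k H \<rho>"
  shows "(\<lambda>\<sigma>. Dmap_preimage n G k g j \<sigma> $ i) holomorphic_on uhp"
proof -
  have "(\<lambda>\<tau>. g p \<tau> $ i) holomorphic_on uhp" if "p \<in> midx n" for p
    using prod_space_Hol[OF g that] by (simp add: Hol_def hol_vec_def)
  thus ?thesis unfolding Dmap_preimage_def by (simp add: holomorphic_on_D_scalar_preimage)
qed

lemma D_scalar_Dmap_preimage:
  assumes knz: "\<forall>N::nat. k \<noteq> - real N" and p: "p \<in> midx n" and \<tau>: "\<tau> \<in> uhp"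
  shows "D_scalar n G k p (\<lambda>j \<sigma>. Dmap_preimage n G k g j \<sigma> $ i) \<tau> = g p \<tau> $ i"
  unfolding Dmap_preimage_def using D_scalar_D_scalar_preimage[OF knz p \<tau>] by simp

lemma Dmap_Dmap_preimage:
  assumes knz: "\<forall>N::nat. k \<noteq> - real N" and g: "g \<in> prod_space n k H \<rho>"
  shows "Dmap n G k (Dmap_preimage n G k g) = g"
proof (intro ext)
  fix p \<tau>
  show "Dmap n G k (Dmap_preimage n G k g) p \<tau> = g p \<tau>"
  proof (cases "p \<in> midx n \<and> \<tau> \<in> uhp")
    case True
    thus ?thesis by (simp add: vec_eq_iff Dmap_nth D_scalar_Dmap_preimage[OF knz])
  next
    case False
    have "g p \<tau> = 0"
      using False g prod_space_Hol[OF g] by (cases "p \<in> midx n") (auto simp: prod_space_def Hol_def)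
    moreover have "Dmap n G k (Dmap_preimage n G k g) p \<tau> = 0"
      unfolding Dmap_def by (simp only: if_not_P[OF False])
    ultimately show ?thesis by simp
  qed
qed

lemma Dmap_preimage_transforms:
  assumes H: "is_sl2z_subgroup H" and k: "\<exists>m::int. k = of_int m / 2" and knz: "\<forall>N::nat. k \<noteq> - real N"
    and g: "g \<in> prod_space n k H \<rho>"
  shows "transforms n G k H \<rho> (Dmap_preimage n G k g)"
  unfolding transforms_def
proof (intro ballI)
  fix ge p \<tau> assume ge: "ge \<in> mp_lift H" and p: "p \<in> midx n" and \<tau>: "\<tau> \<in> uhp"
  obtain a b c d e where ge_eq: "ge = ((a, b, c, d), e)" and e: "e = 1 \<or> e = -1"
    and det: "a * d - b * c = 1" by (rule metaplectic_lift_cases[OF H ge])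
  define h where "h = Dmap_preimage n G k g"
  have hol: "\<And>j. (\<lambda>\<sigma>. h j \<sigma> $ i) holomorphic_on uhp" for i
    unfolding h_def by (rule holomorphic_on_Dmap_preimage_nth[OF g])
  have "slash_scalar n G k (\<lambda>j \<sigma>. h j \<sigma> $ i) ((a, b, c, d), e) p \<tau>
          = (\<Sum>j\<in>UNIV. \<rho> ge $ i $ j * h p \<tau> $ j)" for i
  proof (rule D_scalar_injective[where f'="\<lambda>q \<sigma>. \<Sum>j\<in>UNIV. \<rho> ge $ i $ j * h q \<sigma> $ j",
                                  OF knz holomorphic_on_slash_scalar[OF det hol] _ _ p \<tau>])
    show "(\<lambda>\<sigma>. \<Sum>j\<in>UNIV. \<rho> ge $ i $ j * h q \<sigma> $ j) holomorphic_on uhp" for q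
      by (intro holomorphic_intros hol)
    fix q \<sigma> assume q: "q \<in> midx n" and \<sigma>: "\<sigma> \<in> uhp"
    have "D_scalar n G k q (slash_scalar n G k (\<lambda>j \<sigma>. h j \<sigma> $ i) ((a, b, c, d), e)) \<sigma>
        = ((mp_phi ge \<sigma>) powr (complex_of_real (- 2 * (k + real (sidx n q)))) *s g q (mob (fst ge) \<sigma>)) $ i"
      using D_scalar_slash_scalar[OF det e k knz hol \<sigma>] mob_in_uhp[OF det \<sigma>]
      by (simp add: ge_eq h_def D_scalar_Dmap_preimage[OF knz q] del: mob.simps)
    also have "\<dots> = (\<rho> ge *v g q \<sigma>) $ i"
      using prod_space_Hol[OF g q] ge \<sigma> unfolding Hol_def by simp
    also have "\<dots> = (\<Sum>j\<in>UNIV. \<rho> ge $ i $ j * D_scalar n G k q (\<lambda>j' \<sigma>. h j' \<sigma> $ j) \<sigma>)"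
      by (simp add: matrix_vector_mult_def h_def D_scalar_Dmap_preimage[OF knz q \<sigma>])
    also have "\<dots> = D_scalar n G k q (\<lambda>q \<sigma>. \<Sum>j\<in>UNIV. \<rho> ge $ i $ j * h q \<sigma> $ j) \<sigma>"
      by (rule D_scalar_sum[OF finite _ \<sigma>, symmetric]) (rule hol)
    finally show "D_scalar n G k q (slash_scalar n G k (\<lambda>j \<sigma>. h j \<sigma> $ i) ((a, b, c, d), e)) \<sigma>
        = D_scalar n G k q (\<lambda>q \<sigma>. \<Sum>j\<in>UNIV. \<rho> ge $ i $ j * h q \<sigma> $ j) \<sigma>" .
  qed
  thus "slash_coeff n G k (Dmap_preimage n G k g) ge p \<tau> = \<rho> ge *v Dmap_preimage n G k g p \<tau>"
    by (simp add: vec_eq_iff slash_coeff_nth matrix_vector_mult_def ge_eq h_def)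
qed

lemma Dmap_preimage_in_series_space:
  assumes H: "is_sl2z_subgroup H" and k: "\<exists>m::int. k = of_int m / 2" and knz: "\<forall>N::nat. k \<noteq> - real N"
    and g: "g \<in> prod_space n k H \<rho>"
  shows "Dmap_preimage n G k g \<in> series_space n G k H \<rho>"
proof -
  have "hol_vec (Dmap_preimage n G k g j) uhp" for j
    using holomorphic_on_Dmap_preimage_nth[OF g] by (simp add: hol_vec_def)
  moreover have "Dmap_preimage n G k g j \<tau> = 0" if "j \<notin> midx n \<or> \<tau> \<notin> uhp" for j \<tau>
    using that by (simp add: Dmap_preimage_def vec_eq_iff D_scalar_preimage_outside)
  ultimately show ?thesis
    using Dmap_preimage_transforms[OF H k knz g] by (auto simp: series_space_def fun_eq_iff)
qed

lemma image_Dmap_series_space: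
  assumes H: "is_sl2z_subgroup H" and k: "\<exists>m::int. k = of_int m / 2" and knz: "\<forall>N::nat. k \<noteq> - real N"
  shows "Dmap n G k ` series_space n G k H \<rho> = prod_space n k H \<rho>"
proof
  show "Dmap n G k ` series_space n G k H \<rho> \<subseteq> prod_space n k H \<rho>"
    using Dmap_in_prod_space[OF H k knz] by blast
  show "prod_space n k H \<rho> \<subseteq> Dmap n G k ` series_space n G k H \<rho>"
  proof
    fix g assume g: "g \<in> prod_space n k H \<rho>"
    hence "g = Dmap n G k (Dmap_preimage n G k g)" by (simp add: Dmap_Dmap_preimage[OF knz])
    thus "g \<in> Dmap n G k ` series_space n G k H \<rho>"
      using Dmap_preimage_in_series_space[OF H k knz g] by blast
  qed
qed

theorem proposition4p15:
  fixes n :: nat and G :: "nat \<Rightarrow> nat \<Rightarrow> real" and k :: real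
    and H :: "mat2 set" and \<rho> :: "mpel \<Rightarrow> complex^'m^'m"
  assumes "is_sl2z_subgroup H"
    and "is_rep H \<rho>"
    and "\<forall>i<n. \<forall>j<n. G i j = G j i"
    and "\<exists>m::int. k = of_int m / 2"
    and "\<forall>N::nat. k \<noteq> - real N"
  shows "(\<forall>h\<in>series_space n G k H \<rho>. \<forall>h'\<in>series_space n G k H \<rho>. \<forall>a b :: complex.
            Dmap n G k (\<lambda>j \<tau>. a *s h j \<tau> + b *s h' j \<tau>) =
            (\<lambda>p \<tau>. a *s Dmap n G k h p \<tau> + b *s Dmap n G k h' p \<tau>))
         \<and> bij_betw (Dmap n G k) (series_space n G k H \<rho>) (prod_space n k H \<rho>)"
proof (intro conjI ballI allI)
  fix h h' a b assume "h \<in> series_space n G k H \<rho>" "h' \<in> series_space n G k H \<rho>"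
  thus "Dmap n G k (\<lambda>j \<tau>. a *s h j \<tau> + b *s h' j \<tau>) = (\<lambda>p \<tau>. a *s Dmap n G k h p \<tau> + b *s Dmap n G k h' p \<tau>)"
    by (intro Dmap_linear) (auto simp: series_space_def)
next
  show "bij_betw (Dmap n G k) (series_space n G k H \<rho>) (prod_space n k H \<rho>)"
    unfolding bij_betw_def
    using Dmap_inj_on[OF assms(5)] image_Dmap_series_space[OF assms(1,4,5)] by blast
qed

end
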